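(* Assume the Standing setup, suppose $R(z)$ is analytic on $\mathcal V_\epsilon$ for some $\epsilon>0$, and let $Q_s=(-1)^s(A_0^{-1}A_1)^sA_0^{-1}+(I_X-T_{-1}C_0)^{-s-1}T_{-1}$ for $s\ge0$ (the Maclaurin coefficients of the analytic extension of $R-R_{\rm sin}$ to $|z|<1+\epsilon$). Suppose $c>0$ is such that $\|Q_s\|\le c/(1+\epsilon)^s$ for all $s\ge0$. Then for every $\ell\ge0$ the series $\sum_{r\ge0}\binom{\ell+r}{\ell}Q_{\ell+r}$ converges absolutely, $$T_\ell=\sum_{r\ge0}\binom{\ell+r}{\ell}Q_{\ell+r},$$ and $\|T_\ell\|\le c(1+\epsilon)/\epsilon^{\ell+1}$.
   Context: Standing setup. Let $X,Y$ be complex Banach spaces, let $\mathcal B(X,Y)$ denote the bounded linear operators from $X$ to $Y$ ($\mathcal B(X)=\mathcal B(X,X)$), and let $I_X$ be the identity on $X$. Let $A_0,A_1\in\mathcal B(X,Y)$, let $A(z)=A_0+A_1z$ ($z\in\mathbb C$), and set $C_0=A_0+A_1$, $C_1=A_1$, so that $A(z)=C_0+C_1(z-1)$. Let $R(z)=A(z)^{-1}\in\mathcal B(Y,X)$ where this inverse exists. For $\epsilon>0$ let $\mathcal V_\epsilon=\{z\in\mathbb C:|z|<1+\epsilon,\ z\ne1\}$, and for $\theta>0$ let $\mathcal W_\theta=\{z\in\mathbb C:0<|z-1|<1+\theta\}$. If $R$ is analytic on $\mathcal V_\epsilon$ then it has a Laurent expansion $R(z)=\sum_{j\in\mathbb Z}T_j(z-1)^j$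 on $0<|z-1|<\epsilon$ with $T_j\in\mathcal B(Y,X)$, and (known facts) $T_{-k}=(-1)^{k-1}(T_{-1}C_0)^{k-1}T_{-1}$ for $k\ge1$, $T_\ell=(-1)^\ell(T_0C_1)^\ell T_0$ for $\ell\ge0$, $\|(T_{-1}C_0)^k\|^{1/k}\to0$, $T_{-1}C_1+T_0C_0=I_X$, $C_1T_{-1}+C_0T_0=I_Y$, $T_{-1}C_iT_0=0$ and $T_0C_iT_{-1}=0$ for $i=0,1$; moreover $P=T_{-1}C_1$ and $P^c=I_X-P=T_0C_0$ are complementary projections on $X$ and $Q=C_1T_{-1}$, $Q^c=I_Y-Q=C_0T_0$ are complementary projections on $Y$. The singular part $R_{\rm sin}(z)=\sum_{k\ge1}T_{-k}(z-1)^{-k}$ converges for all $z\ne1$ and the regular part is $R_{\rm reg}(z)=\sum_{\ell\ge0}T_\ell(z-1)^\ell$. Define, for integers $s\ge0$, $U_s=-(I_X-T_{-1}C_0)^{-s-1}T_{-1}$ (these are the Maclaurin coefficients of $R_{\rm sin}$) and, whenever $I_X-T_0C_1$ is invertible, $V_s=(-1)^s(I_X-T_0C_1)^{-s-1}(T_0C_1)^sT_0$. *)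

theory Defs
  imports "HOL-Analysis.Analysis"
begin

class complex_banach = banach +
  fixes scaleC :: "complex \<Rightarrow> 'a \<Rightarrow> 'a"
  assumes scaleC_add_left: "scaleC (a + b) x = scaleC a x + scaleC b x"
    and scaleC_add_right: "scaleC a (x + y) = scaleC a x + scaleC a y"
    and scaleC_scaleC: "scaleC a (scaleC b x) = scaleC (a * b) x"
    and scaleC_of_real: "scaleC (complex_of_real r) x = r *\<^sub>R x"
    and norm_scaleC: "norm (scaleC a x) = cmod a * norm x"

text \<open>Membership in B(X,Y): a bounded (real-)linear map that is complex linear.\<close>
definition clinear_op :: "('a::complex_banach \<Rightarrow>\<^sub>L 'b::complex_banach) \<Rightarrow> bool" where
  "clinear_op T \<longleftrightarrow> (\<forall>c x. blinfun_apply T (scaleC c x) = scaleC c (blinfun_apply T x))"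

definition cscaleL :: "complex \<Rightarrow> ('a::real_normed_vector \<Rightarrow>\<^sub>L 'b::complex_banach) \<Rightarrow> ('a \<Rightarrow>\<^sub>L 'b)" where
  "cscaleL c T = Blinfun (\<lambda>x. scaleC c (blinfun_apply T x))"

definition op_inv :: "('a::real_normed_vector \<Rightarrow>\<^sub>L 'b::real_normed_vector) \<Rightarrow> ('b \<Rightarrow>\<^sub>L 'a)" where
  "op_inv A = (SOME B. B o\<^sub>L A = id_blinfun \<and> A o\<^sub>L B = id_blinfun)"

definition opow :: "('a::real_normed_vector \<Rightarrow>\<^sub>L 'a) \<Rightarrow> nat \<Rightarrow> ('a \<Rightarrow>\<^sub>L 'a)" where
  "opow T n = ((\<lambda>S. T o\<^sub>L S) ^^ n) id_blinfun"

definition op_analytic_on ::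
  "complex set \<Rightarrow> (complex \<Rightarrow> ('a::real_normed_vector \<Rightarrow>\<^sub>L 'b::complex_banach)) \<Rightarrow> bool" where
  "op_analytic_on S f \<longleftrightarrow>
     (\<forall>z\<in>S. \<exists>r>0. \<exists>a::nat \<Rightarrow> ('a \<Rightarrow>\<^sub>L 'b).
        \<forall>w\<in>ball z r. (\<lambda>n. cscaleL ((w - z) ^ n) (a n)) sums f w)"

end

theory Submission
  imports Defs
begin

(* Write A(z) = C0 + (z - 1) A1. Comparing coefficients in R(z) A(z) = A(z) R(z) = I
   (Laurent coefficients are unique: average over roots of unity) shows that
   N = T(-1) C0 is quasinilpotent and T(-k-1) = (-N)^k T(-1), so the singular part is
   R_sin(z) = (z - 1 + N)^-1 T(-1), analytic for z <> 1. Near 0, R(z) and R_sin(z) have the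
   Neumann expansions whose difference has Maclaurin coefficients Q_s; by the identity
   theorem the series sum_s Q_s z^s, convergent for |z| < 1 + eps by the bound on Q_s,
   equals R - R_sin on the punctured disc. Re-expanding it about z = 1 gives the Taylor
   coefficients of R - R_sin at 1, i.e. T_l = sum_r binom(l+r, l) Q_(l+r), and the negative
   binomial series sum_r binom(l+r, l) q^r = (1 - q)^-(l+1) with q = 1/(1 + eps) gives the
   bound. *)

section \<open>Operators and complex scalars\<close>

interpretation blinfun_compose: bounded_bilinear blinfun_compose
  by (rule bounded_bilinear_blinfun_compose)

lemma blinfun_compose_assoc: "(A o\<^sub>L B) o\<^sub>L C = A o\<^sub>L (B o\<^sub>L C)"
  by (rule blinfun_eqI) simp

lemma blinfun_compose_id [simp]:
  "id_blinfun o\<^sub>L A = A" "A o\<^sub>L id_blinfun = A"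
  by (auto intro: blinfun_eqI)

lemma blinfun_left_inverse_unique:
  assumes "B o\<^sub>L A = id_blinfun" "A o\<^sub>L C = id_blinfun"
  shows "B = C"
  by (metis assms blinfun_compose_assoc blinfun_compose_id)

lemma op_inv_eqI:
  assumes "B o\<^sub>L A = id_blinfun" "A o\<^sub>L B = id_blinfun"
  shows "op_inv A = B"
proof -
  have "op_inv A o\<^sub>L A = id_blinfun \<and> A o\<^sub>L op_inv A = id_blinfun"
    unfolding op_inv_def by (rule someI[of _ B]) (use assms in blast)
  then show ?thesis
    using blinfun_left_inverse_unique assms(2) by blast
qed

lemma bounded_linear_scaleC: "bounded_linear (scaleC c :: 'a::complex_banach \<Rightarrow> 'a)"
proof
  show "scaleC c (x + y) = scaleC c x + scaleC c y" for x y :: 'a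
    by (rule scaleC_add_right)
  show "scaleC c (r *\<^sub>R x) = r *\<^sub>R scaleC c x" for r and x :: 'a
    by (metis scaleC_of_real scaleC_scaleC mult.commute)
  show "\<exists>K. \<forall>x::'a. norm (scaleC c x) \<le> norm x * K"
    by (rule exI[of _ "cmod c"]) (simp add: norm_scaleC mult.commute)
qed

lemma scaleC_one [simp]: "scaleC 1 x = x"
  using scaleC_of_real[of 1 x] by simp

lemmas scaleC_diff_right = linear_diff[OF bounded_linear.linear[OF bounded_linear_scaleC]]
lemmas scaleC_scaleR = linear_scale[OF bounded_linear.linear[OF bounded_linear_scaleC]]

lemma cscaleL_apply [simp]: "blinfun_apply (cscaleL c T) x = scaleC c (T x)"
  unfolding cscaleL_def
  by (subst bounded_linear_Blinfun_apply)
     (auto intro: bounded_linear_compose[OF bounded_linear_scaleC blinfun.bounded_linear_right])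

lemma cscaleL_cscaleL: "cscaleL a (cscaleL b T) = cscaleL (a * b) T"
  by (rule blinfun_eqI) (simp add: scaleC_scaleC)

lemma cscaleL_one [simp]: "cscaleL 1 T = T"
  by (rule blinfun_eqI) simp

lemma cscaleL_zero_left [simp]: "cscaleL 0 T = 0"
  by (rule blinfun_eqI) (simp add: scaleC_of_real[of 0, simplified])

lemma cscaleL_of_real: "cscaleL (of_real r) T = r *\<^sub>R T"
  by (rule blinfun_eqI) (simp add: scaleC_of_real blinfun.scaleR_left)

lemma cscaleL_minus_one: "cscaleL (- 1) T = - T"
  using cscaleL_of_real[of "- 1" T] by simp

lemma cscaleL_minus_left: "cscaleL (- a) T = - cscaleL a T"
  using cscaleL_cscaleL[of "- 1" a T] by (simp add: cscaleL_minus_one)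

lemma cscaleL_sign_power: "cscaleL ((- 1) ^ n * a) T = cscaleL a ((- 1::real) ^ n *\<^sub>R T)"
proof -
  have "cscaleL ((- 1) ^ n * a) T = cscaleL a (cscaleL (of_real ((- 1) ^ n)) T)"
    by (simp add: cscaleL_cscaleL mult.commute)
  then show ?thesis
    by (simp only: cscaleL_of_real)
qed

lemma cscaleL_add_left: "cscaleL (a + b) T = cscaleL a T + cscaleL b T"
  by (rule blinfun_eqI) (simp add: scaleC_add_left blinfun.add_left)

lemma cscaleL_sum_left: "(\<Sum>i\<in>I. cscaleL (c i) T) = cscaleL (\<Sum>i\<in>I. c i) T"
  by (induction I rule: infinite_finite_induct) (simp_all add: cscaleL_add_left)

lemma bounded_linear_cscaleL:
  "bounded_linear (cscaleL c :: ('a::real_normed_vector \<Rightarrow>\<^sub>L 'b::complex_banach) \<Rightarrow> _)"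
proof
  show "cscaleL c (S + T) = cscaleL c S + cscaleL c T" for S T :: "'a \<Rightarrow>\<^sub>L 'b"
    by (rule blinfun_eqI) (simp add: scaleC_add_right blinfun.add_left)
  show "cscaleL c (r *\<^sub>R T) = r *\<^sub>R cscaleL c T" for r and T :: "'a \<Rightarrow>\<^sub>L 'b"
    by (rule blinfun_eqI) (simp add: scaleC_scaleR blinfun.scaleR_left)
  have "norm (cscaleL c T) \<le> norm T * cmod c" for T :: "'a \<Rightarrow>\<^sub>L 'b"
    by (rule norm_blinfun_bound)
       (use mult_left_mono[OF norm_blinfun, of "cmod c"] in \<open>auto simp: norm_scaleC algebra_simps\<close>)
  then show "\<exists>K. \<forall>T::'a \<Rightarrow>\<^sub>L 'b. norm (cscaleL c T) \<le> norm T * K"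
    by blast
qed

lemmas cscaleL_zero_right [simp] = linear_0[OF bounded_linear.linear[OF bounded_linear_cscaleL]]
lemmas cscaleL_add_right = linear_add[OF bounded_linear.linear[OF bounded_linear_cscaleL]]
lemmas cscaleL_diff_right = linear_diff[OF bounded_linear.linear[OF bounded_linear_cscaleL]]
lemmas cscaleL_minus_right = linear_neg[OF bounded_linear.linear[OF bounded_linear_cscaleL]]

lemma norm_cscaleL: "norm (cscaleL c T) = cmod c * norm T"
proof -
  have le: "norm (cscaleL c T) \<le> cmod c * norm T" for c T
    by (rule norm_blinfun_bound) (auto simp: norm_scaleC mult.assoc mult_left_mono norm_blinfun)
  show ?thesis
  proof (cases "c = 0")
    case False
    have "norm T \<le> cmod (1 / c) * norm (cscaleL c T)"
      using le[of "1 / c" "cscaleL c T"] False by (simp add: cscaleL_cscaleL)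
    then have "cmod c * norm T \<le> norm (cscaleL c T)"
      using False by (simp add: norm_divide field_simps)
    with le[of c T] show ?thesis by linarith
  qed (use le in simp)
qed

lemma cscaleL_compose_left: "cscaleL c S o\<^sub>L T = cscaleL c (S o\<^sub>L T)"
  by (rule blinfun_eqI) simp

lemma clinear_opD: "clinear_op S \<Longrightarrow> S (scaleC c x) = scaleC c (S x)"
  unfolding clinear_op_def by blast

lemma cscaleL_compose_right: "clinear_op S \<Longrightarrow> S o\<^sub>L cscaleL c T = cscaleL c (S o\<^sub>L T)"
  by (rule blinfun_eqI) (simp add: clinear_opD)

lemma cscaleL_compose_cscaleL:
  "clinear_op S \<Longrightarrow> cscaleL a S o\<^sub>L cscaleL b T = cscaleL (a * b) (S o\<^sub>L T)"
  by (simp add: cscaleL_compose_left cscaleL_compose_right cscaleL_cscaleL)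

lemma clinear_op_id [simp]: "clinear_op id_blinfun"
  by (simp add: clinear_op_def)

lemma clinear_op_compose: "clinear_op S \<Longrightarrow> clinear_op T \<Longrightarrow> clinear_op (S o\<^sub>L T)"
  by (simp add: clinear_op_def)

lemma clinear_op_add: "clinear_op S \<Longrightarrow> clinear_op T \<Longrightarrow> clinear_op (S + T)"
  by (simp add: clinear_op_def blinfun.add_left scaleC_add_right)

lemma clinear_op_diff: "clinear_op S \<Longrightarrow> clinear_op T \<Longrightarrow> clinear_op (S - T)"
  by (simp add: clinear_op_def blinfun.diff_left scaleC_diff_right)

lemma clinear_op_cscaleL: "clinear_op S \<Longrightarrow> clinear_op (cscaleL a S)"
  by (simp add: clinear_op_def scaleC_scaleC mult.commute)

lemma clinear_op_inverse:
  assumes "clinear_op A" "B o\<^sub>L A = id_blinfun" "A o\<^sub>L B = id_blinfun"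
  shows "clinear_op B"
  unfolding clinear_op_def
proof (intro allI)
  fix c x
  have "B (scaleC c x) = B (scaleC c (A (B x)))"
    using assms(3) by (metis blinfun_apply_blinfun_compose blinfun_apply_id_blinfun)
  also have "\<dots> = B (A (scaleC c (B x)))"
    using assms(1) by (simp add: clinear_opD)
  also have "\<dots> = scaleC c (B x)"
    using assms(2) by (metis blinfun_apply_blinfun_compose blinfun_apply_id_blinfun)
  finally show "B (scaleC c x) = scaleC c (B x)" .
qed

lemma opow_0 [simp]: "opow T 0 = id_blinfun"
  by (simp add: opow_def)

lemma opow_Suc: "opow T (Suc n) = T o\<^sub>L opow T n"
  by (simp add: opow_def)

lemma opow_Suc': "opow T (Suc n) = opow T n o\<^sub>L T"
  by (induction n) (simp_all add: opow_Suc flip: blinfun_compose_assoc)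

lemma norm_opow_le: "norm (opow T n) \<le> norm T ^ n"
proof (induction n)
  case 0
  then show ?case by (simp add: norm_blinfun_id_le)
next
  case (Suc n)
  have "norm (opow T (Suc n)) \<le> norm T * norm (opow T n)"
    unfolding opow_Suc by (rule norm_blinfun_compose)
  also have "\<dots> \<le> norm T * norm T ^ n"
    using Suc by (simp add: mult_left_mono)
  finally show ?case by simp
qed

lemma clinear_op_opow: "clinear_op T \<Longrightarrow> clinear_op (opow T n)"
  by (induction n) (simp_all add: opow_Suc clinear_op_compose)

lemma opow_uminus: "opow (- T) n = (- 1) ^ n *\<^sub>R opow T n"
  by (induction n) (simp_all add: opow_Suc blinfun_compose.scaleR_right blinfun_compose.minus_left)

section \<open>Operator-valued power series\<close>

lemma summable_norm_mult_power_less: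
  assumes "\<And>n. norm (a n) * \<rho> ^ n \<le> K" "0 \<le> t" "t < \<rho>"
  shows "summable (\<lambda>n. norm (a n) * t ^ n)"
proof (rule summable_comparison_test'[where N = 0])
  have \<rho>: "\<rho> > 0" using assms by linarith
  show "summable (\<lambda>n. K * (t / \<rho>) ^ n)"
    using assms \<rho> by (intro summable_mult summable_geometric) auto
  show "norm (norm (a n) * t ^ n) \<le> K * (t / \<rho>) ^ n" for n
  proof -
    have "norm (norm (a n) * t ^ n) = (norm (a n) * \<rho> ^ n) * (t / \<rho>) ^ n"
      using \<rho> assms(2) by (simp add: power_divide field_simps)
    also have "\<dots> \<le> K * (t / \<rho>) ^ n"
      using assms \<rho> by (intro mult_right_mono) auto
    finally show ?thesis .
  qed
qed

lemma power_series_abs_summable: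
  fixes a :: "nat \<Rightarrow> ('a::real_normed_vector \<Rightarrow>\<^sub>L 'b::complex_banach)"
  assumes "\<And>w. 0 < cmod (w - z) \<Longrightarrow> cmod (w - z) < r \<Longrightarrow> summable (\<lambda>n. cscaleL ((w - z) ^ n) (a n))"
    and "0 \<le> t" "t < r"
  shows "summable (\<lambda>n. norm (a n) * t ^ n)"
proof -
  define t' where "t' = (t + r) / 2"
  have t': "t < t'" "t' < r" using assms by (auto simp: t'_def)
  have "summable (\<lambda>n. cscaleL (of_real t' ^ n) (a n))"
    using assms(1)[of "z + of_real t'"] t' assms(2) by simp
  then obtain K where "\<And>n. norm (cscaleL (of_real t' ^ n) (a n)) \<le> K"
    by (metis Bseq_def summable_imp_Bseq)
  then have "norm (a n) * t' ^ n \<le> K" for n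
    using t' assms(2) by (simp add: norm_cscaleL norm_power mult.commute)
  then show ?thesis
    using summable_norm_mult_power_less assms(2) t'(1) by blast
qed

text \<open>Dividing out the first nonzero coefficient leaves a series that is bounded by a
  multiple of the distance to the centre.\<close>

lemma power_series_coeffs_eq_0:
  fixes a :: "nat \<Rightarrow> ('a::real_normed_vector \<Rightarrow>\<^sub>L 'b::complex_banach)"
  assumes r: "r > 0"
    and sums: "\<And>w. 0 < cmod (w - z) \<Longrightarrow> cmod (w - z) < r \<Longrightarrow> (\<lambda>n. cscaleL ((w - z) ^ n) (a n)) sums f w"
    and limpt: "z islimpt {w. f w = 0}"
  shows "a n = 0"
proof (induction n rule: less_induct)
  case (less n)
  define t where "t = r / 2"
  have t: "0 < t" "t < r" using r by (auto simp: t_def)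
  have "summable (\<lambda>m. norm (a m) * t ^ m)"
    by (rule power_series_abs_summable[of z r a]) (use sums t in \<open>auto simp: sums_iff\<close>)
  then have "summable (\<lambda>k. norm (a (k + Suc n)) * t ^ (k + Suc n) / t ^ Suc n)"
    by (subst summable_iff_shift) (rule summable_divide)
  then have sC: "summable (\<lambda>k. norm (a (k + Suc n)) * t ^ k)"
    using t by (simp add: power_add)
  define C where "C = (\<Sum>k. norm (a (k + Suc n)) * t ^ k)"
  have bound: "norm (a n) \<le> d * C" if d: "0 < d" "d < t" for d
  proof -
    obtain w where w: "f w = 0" "w \<noteq> z" "dist w z < d"
      using limpt d unfolding islimpt_approachable by blast
    define u where "u = w - z"
    have u: "u \<noteq> 0" "cmod u < d" using w by (auto simp: u_def dist_norm)
    have "(\<lambda>m. cscaleL (u ^ m) (a m)) sums 0"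
      using sums[of w] w u d t by (simp add: u_def)
    then have "(\<lambda>k. cscaleL (u ^ (k + n)) (a (k + n))) sums (0 - (\<Sum>i<n. cscaleL (u ^ i) (a i)))"
      by (rule sums_split_initial_segment)
    then have "(\<lambda>k. cscaleL (u ^ (k + n)) (a (k + n))) sums 0"
      using less by simp
    then have "(\<lambda>k. cscaleL (1 / u ^ n) (cscaleL (u ^ (k + n)) (a (k + n)))) sums cscaleL (1 / u ^ n) 0"
      by (rule bounded_linear.sums[OF bounded_linear_cscaleL])
    then have "(\<lambda>k. cscaleL (u ^ k) (a (k + n))) sums 0"
      using u by (simp add: cscaleL_cscaleL power_add)
    then have "(\<lambda>k. cscaleL (u ^ Suc k) (a (Suc k + n))) sums (0 - cscaleL (u ^ 0) (a (0 + n)))"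
      by (subst sums_Suc_iff) simp
    then have tail: "(\<lambda>k. cscaleL (u ^ Suc k) (a (k + Suc n))) sums (- a n)"
      by simp
    have term_le: "norm (cscaleL (u ^ Suc k) (a (k + Suc n))) \<le> d * (norm (a (k + Suc n)) * t ^ k)" for k
    proof -
      have "norm (cscaleL (u ^ Suc k) (a (k + Suc n))) = cmod u * cmod u ^ k * norm (a (k + Suc n))"
        by (simp add: norm_cscaleL norm_power norm_mult)
      also have "\<dots> \<le> d * t ^ k * norm (a (k + Suc n))"
        using u d by (intro mult_right_mono mult_mono power_mono) auto
      finally show ?thesis by (simp add: algebra_simps)
    qed
    have sd: "summable (\<lambda>k. d * (norm (a (k + Suc n)) * t ^ k))"
      using sC by (rule summable_mult)
    have sn: "summable (\<lambda>k. norm (cscaleL (u ^ Suc k) (a (k + Suc n))))"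
      by (rule summable_comparison_test'[OF sd, of 0]) (use term_le in auto)
    have "norm (a n) = norm (\<Sum>k. cscaleL (u ^ Suc k) (a (k + Suc n)))"
      using tail by (simp add: sums_iff)
    also have "\<dots> \<le> (\<Sum>k. d * (norm (a (k + Suc n)) * t ^ k))"
      using summable_norm[OF sn] suminf_le[OF term_le sn sd] by linarith
    also have "\<dots> = d * C" unfolding C_def using sC by (rule suminf_mult)
    finally show ?thesis .
  qed
  have "C \<ge> 0" unfolding C_def using sC t by (intro suminf_nonneg) auto
  show "a n = 0"
  proof (rule ccontr)
    assume "a n \<noteq> 0"
    define d where "d = min (t / 2) (norm (a n) / (2 * (C + 1)))"
    have "0 < d" "d < t" using t \<open>a n \<noteq> 0\<close> \<open>C \<ge> 0\<close> by (auto simp: d_def)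
    have "d * C \<le> (norm (a n) / (2 * (C + 1))) * C"
      using \<open>C \<ge> 0\<close> by (intro mult_right_mono) (auto simp: d_def)
    also have "\<dots> < norm (a n)"
      using \<open>a n \<noteq> 0\<close> \<open>C \<ge> 0\<close> by (auto simp: field_simps intro!: add_nonneg_pos)
    finally show False using bound[OF \<open>0 < d\<close> \<open>d < t\<close>] by linarith
  qed
qed

lemma op_analytic_on_eq_0:
  fixes h :: "complex \<Rightarrow> ('a::real_normed_vector \<Rightarrow>\<^sub>L 'b::complex_banach)"
  assumes D: "open D" "connected D" and an: "op_analytic_on D h"
    and z0: "z0 \<in> D" "r0 > 0" "\<forall>w\<in>ball z0 r0. h w = 0"
    and z: "z \<in> D"
  shows "h z = 0"
proof -
  define S where "S = {z\<in>D. \<exists>r>0. \<forall>w\<in>ball z r. h w = 0}"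
  have "open S"
    unfolding open_contains_ball
  proof
    fix z assume "z \<in> S"
    then obtain r where r: "r > 0" "\<forall>w\<in>ball z r. h w = 0" "z \<in> D"
      by (auto simp: S_def)
    obtain r' where r': "r' > 0" "ball z r' \<subseteq> D"
      using D(1) \<open>z \<in> D\<close> open_contains_ball by blast
    have "y \<in> S" if y: "y \<in> ball z (min r r')" for y
    proof -
      have "\<forall>w\<in>ball y (min r r' - dist z y). h w = 0"
      proof
        fix w assume "w \<in> ball y (min r r' - dist z y)"
        then have "dist z w < r" using dist_triangle[of z w y] by (auto simp: dist_commute)
        then show "h w = 0" using r(2) by auto
      qed
      then show ?thesis
        using y r' unfolding S_def by (intro CollectI conjI exI[of _ "min r r' - dist z y"]) auto
    qed
    then show "\<exists>e>0. ball z e \<subseteq> S"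
      using r r' by (intro exI[of _ "min r r'"]) auto
  qed
  have "z \<in> S" if z: "z \<in> D" "z \<in> closure S" for z
  proof -
    obtain r a where ra: "r > 0" "\<forall>w\<in>ball z r. (\<lambda>n. cscaleL ((w - z) ^ n) (a n)) sums h w"
      using an z unfolding op_analytic_on_def by blast
    have "S \<subseteq> {w. h w = 0}" by (force simp: S_def)
    have "z islimpt {w. h w = 0}"
    proof (cases "z \<in> S")
      case True
      then obtain r1 where "r1 > 0" "\<forall>w\<in>ball z r1. h w = 0" by (auto simp: S_def)
      then show ?thesis
        using islimpt_subset[of z "ball z r1"] by (force simp: islimpt_ball)
    next
      case False
      then show ?thesis
        using z islimpt_subset[OF _ \<open>S \<subseteq> _\<close>] by (auto simp: closure_def)
    qed
    then have "a n = 0" for n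
      by (intro power_series_coeffs_eq_0[of r z a h]) (use ra in \<open>auto simp: dist_norm norm_minus_commute\<close>)
    then have "\<forall>w\<in>ball z r. h w = 0"
      using ra by (auto simp: sums_iff)
    then show "z \<in> S" using z ra by (auto simp: S_def)
  qed
  moreover have "S \<subseteq> D \<inter> closure S"
    using closure_subset[of S] by (auto simp: S_def)
  ultimately have "closedin (top_of_set D) S"
    unfolding closedin_closed by (intro exI[of _ "closure S"]) auto
  moreover have "openin (top_of_set D) S"
    using \<open>open S\<close> by (auto simp: openin_open S_def)
  moreover have "S \<noteq> {}" using z0 by (auto simp: S_def)
  ultimately have "S = D"
    using D(2) unfolding connected_clopen by blast
  then obtain r where "r > 0" "\<forall>w\<in>ball z r. h w = 0"
    using z by (auto simp: S_def)
  then show ?thesis by simp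
qed

lemma op_analytic_on_diff:
  assumes "op_analytic_on S f" "op_analytic_on S g"
  shows "op_analytic_on S (\<lambda>z. f z - g z)"
  unfolding op_analytic_on_def
proof
  fix z assume "z \<in> S"
  obtain r1 a1 where 1: "r1 > 0" "\<forall>w\<in>ball z r1. (\<lambda>n. cscaleL ((w - z) ^ n) (a1 n)) sums f w"
    using assms(1) \<open>z \<in> S\<close> unfolding op_analytic_on_def by blast
  obtain r2 a2 where 2: "r2 > 0" "\<forall>w\<in>ball z r2. (\<lambda>n. cscaleL ((w - z) ^ n) (a2 n)) sums g w"
    using assms(2) \<open>z \<in> S\<close> unfolding op_analytic_on_def by blast
  have "\<forall>w\<in>ball z (min r1 r2). (\<lambda>n. cscaleL ((w - z) ^ n) (a1 n - a2 n)) sums (f w - g w)"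
    using sums_diff[of "\<lambda>n. cscaleL ((w - z) ^ n) (a1 n)" _ "\<lambda>n. cscaleL ((w - z) ^ n) (a2 n)"
        for w] 1 2
    by (simp add: cscaleL_diff_right)
  then show "\<exists>r>0. \<exists>a. \<forall>w\<in>ball z r. (\<lambda>n. cscaleL ((w - z) ^ n) (a n)) sums (f w - g w)"
    using 1 2 by (metis min_less_iff_conj)
qed

lemma neumann_series:
  fixes E :: "'a::complex_banach \<Rightarrow>\<^sub>L 'a"
  assumes E: "clinear_op E" and summable: "summable (\<lambda>n. cmod c ^ n * norm (opow E n))"
  defines "M \<equiv> (\<Sum>n. cscaleL (c ^ n) (opow E n))"
  shows "(\<lambda>n. cscaleL (c ^ n) (opow E n)) sums M"
    and "(id_blinfun - cscaleL c E) o\<^sub>L M = id_blinfun"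
    and "M o\<^sub>L (id_blinfun - cscaleL c E) = id_blinfun"
proof -
  define f where "f n = cscaleL (c ^ n) (opow E n)" for n
  have "summable (\<lambda>n. norm (f n))"
    using summable by (simp add: f_def norm_cscaleL norm_power)
  then have "summable f" by (rule summable_norm_cancel)
  then show M: "(\<lambda>n. cscaleL (c ^ n) (opow E n)) sums M"
    unfolding M_def f_def by (rule summable_sums)
  have telescope: "(\<lambda>n. f n - f (Suc n)) sums id_blinfun"
    using telescope_sums'[OF summable_LIMSEQ_zero[OF \<open>summable f\<close>]] by (simp add: f_def)
  have "cscaleL c E o\<^sub>L f n = f (Suc n)" for n
    unfolding f_def cscaleL_compose_cscaleL[OF E] opow_Suc power_Suc ..
  then have "(id_blinfun - cscaleL c E) o\<^sub>L f n = f n - f (Suc n)" for n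
    by (simp add: blinfun_compose.diff_left)
  moreover have "(\<lambda>n. (id_blinfun - cscaleL c E) o\<^sub>L f n) sums ((id_blinfun - cscaleL c E) o\<^sub>L M)"
    using bounded_linear.sums[OF blinfun_compose.bounded_linear_right M] unfolding f_def .
  ultimately show "(id_blinfun - cscaleL c E) o\<^sub>L M = id_blinfun"
    using telescope sums_unique2 by auto
  have "f n o\<^sub>L cscaleL c E = f (Suc n)" for n
    unfolding f_def cscaleL_compose_cscaleL[OF clinear_op_opow[OF E]] opow_Suc'[symmetric]
      power_Suc mult.commute[of c] ..
  then have "f n o\<^sub>L (id_blinfun - cscaleL c E) = f n - f (Suc n)" for n
    by (simp add: blinfun_compose.diff_right)
  moreover have "(\<lambda>n. f n o\<^sub>L (id_blinfun - cscaleL c E)) sums (M o\<^sub>L (id_blinfun - cscaleL c E))"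
    using bounded_linear.sums[OF blinfun_compose.bounded_linear_left M] unfolding f_def .
  ultimately show "M o\<^sub>L (id_blinfun - cscaleL c E) = id_blinfun"
    using telescope sums_unique2 by auto
qed

text \<open>Inverting \<open>L\<^sub>0 + z P = L\<^sub>0 (I + z L\<^sub>0\<^sup>-\<^sup>1 P)\<close> by a Neumann series gives the power series
  of the inverse of a perturbed invertible operator.\<close>

lemma perturbed_inverse_sums:
  fixes L0 P :: "'a::complex_banach \<Rightarrow>\<^sub>L 'b::complex_banach"
  assumes L0: "clinear_op L0" "E o\<^sub>L L0 = id_blinfun" "L0 o\<^sub>L E = id_blinfun"
    and P: "clinear_op P"
    and B: "B o\<^sub>L (L0 + cscaleL z P) = id_blinfun"
    and small: "cmod z * norm (E o\<^sub>L P) < 1"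
  shows "(\<lambda>n. cscaleL (z ^ n) ((- 1::real) ^ n *\<^sub>R (opow (E o\<^sub>L P) n o\<^sub>L E))) sums B"
proof -
  define K where "K = E o\<^sub>L P"
  have E: "clinear_op E" using clinear_op_inverse[OF L0] .
  have K: "clinear_op K" unfolding K_def using E P by (rule clinear_op_compose)
  have "summable (\<lambda>n. cmod (- z) ^ n * norm (opow K n))"
  proof (rule summable_comparison_test'[where N = 0])
    show "summable (\<lambda>n. (cmod z * norm K) ^ n)"
      using small by (intro summable_geometric) (auto simp: K_def)
    show "norm (cmod (- z) ^ n * norm (opow K n)) \<le> (cmod z * norm K) ^ n" for n
      by (simp add: power_mult_distrib mult_left_mono norm_opow_le)
  qed
  note neumann = neumann_series[OF K this]
  define M where "M = (\<Sum>n. cscaleL ((- z) ^ n) (opow K n))"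
  have "L0 o\<^sub>L cscaleL (- z) K = - cscaleL z P"
    using L0(3) by (simp add: cscaleL_compose_right[OF L0(1)] K_def cscaleL_minus_left
        blinfun_compose.minus_right flip: blinfun_compose_assoc)
  then have factor: "L0 + cscaleL z P = L0 o\<^sub>L (id_blinfun - cscaleL (- z) K)"
    by (simp add: blinfun_compose.diff_right)
  have "(L0 + cscaleL z P) o\<^sub>L (M o\<^sub>L E) = id_blinfun"
    using neumann(2) L0(3) unfolding factor M_def by (simp flip: blinfun_compose_assoc)
       (simp add: blinfun_compose_assoc)
  then have "B = M o\<^sub>L E"
    using blinfun_left_inverse_unique[OF B] by blast
  moreover have "(\<lambda>n. cscaleL ((- z) ^ n) (opow K n) o\<^sub>L E) sums (M o\<^sub>L E)"
    using bounded_linear.sums[OF blinfun_compose.bounded_linear_left neumann(1)] unfolding M_def .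
  moreover have "cscaleL ((- z) ^ n) (opow K n) o\<^sub>L E = cscaleL (z ^ n) ((- 1::real) ^ n *\<^sub>R (opow K n o\<^sub>L E))"
    for n
    by (simp add: cscaleL_compose_left power_minus[of z] mult.commute[of _ "z ^ n"]
        flip: cscaleL_sign_power)
  ultimately show ?thesis by (simp add: K_def)
qed

lemma binomial_term_le:
  fixes x y :: real
  assumes "0 \<le> x" "0 \<le> y" "l \<le> s"
  shows "of_nat (s choose l) * x ^ l * y ^ (s - l) \<le> (x + y) ^ s"
proof -
  have "of_nat (s choose l) * x ^ l * y ^ (s - l) \<le> (\<Sum>k\<le>s. of_nat (s choose k) * x ^ k * y ^ (s - k))"
    using assms by (intro member_le_sum) auto
  also have "\<dots> = (x + y) ^ s" by (rule binomial_ring[symmetric])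
  finally show ?thesis .
qed

lemma summable_norm_taylor_coeff:
  fixes a :: "nat \<Rightarrow> ('a::real_normed_vector \<Rightarrow>\<^sub>L 'b::complex_banach)"
  assumes summable: "summable (\<lambda>s. norm (a s) * t ^ s)" and z0: "cmod z0 < t"
  shows "summable (\<lambda>r. norm (cscaleL (of_nat ((l + r) choose l) * z0 ^ r) (a (l + r))))"
proof -
  define d where "d = t - cmod z0"
  have d: "d > 0" using z0 by (simp add: d_def)
  have "summable (\<lambda>r. norm (a (r + l)) * t ^ (r + l) / d ^ l)"
    using summable by (subst summable_iff_shift) (rule summable_divide)
  then show ?thesis
  proof (rule summable_comparison_test'[where N = 0])
    fix r :: nat
    have "of_nat ((l + r) choose l) * d ^ l * cmod z0 ^ (l + r - l) \<le> (d + cmod z0) ^ (l + r)"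
      by (rule binomial_term_le) (use d in auto)
    then have "of_nat ((l + r) choose l) * cmod z0 ^ r \<le> t ^ (l + r) / d ^ l"
      using d by (simp add: d_def field_simps)
    then have "norm (a (l + r)) * (of_nat ((l + r) choose l) * cmod z0 ^ r)
        \<le> norm (a (l + r)) * (t ^ (l + r) / d ^ l)"
      by (rule mult_left_mono) simp
    then show "norm (norm (cscaleL (of_nat ((l + r) choose l) * z0 ^ r) (a (l + r))))
        \<le> norm (a (r + l)) * t ^ (r + l) / d ^ l"
      by (simp add: norm_cscaleL norm_mult norm_power add.commute mult.commute)
  qed
qed

text \<open>Expanding \<open>(z\<^sub>0 + w)\<^sup>s\<close> binomially gives an absolutely summable double family,
  which may be summed either by \<open>s\<close> or by the power \<open>l\<close> of \<open>w\<close>.\<close>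

lemma power_series_reexpand:
  fixes a :: "nat \<Rightarrow> ('a::real_normed_vector \<Rightarrow>\<^sub>L 'b::complex_banach)"
  assumes summable: "summable (\<lambda>s. norm (a s) * t ^ s)" and zw: "cmod z0 + cmod w < t"
  shows "(\<lambda>l. cscaleL (w ^ l) (\<Sum>r. cscaleL (of_nat ((l + r) choose l) * z0 ^ r) (a (l + r))))
           sums (\<Sum>s. cscaleL ((z0 + w) ^ s) (a s))"
proof -
  have z0: "cmod z0 < t" using zw by (smt (verit) norm_ge_zero)
  define G where "G = (\<lambda>(s, l). cscaleL (w ^ l * (of_nat (s choose l) * z0 ^ (s - l))) (a s))"
  define F where "F = (\<lambda>(l, r). cscaleL (w ^ l * (of_nat ((l + r) choose l) * z0 ^ r)) (a (l + r)))"
  define SG where "SG = Sigma (UNIV::nat set) (\<lambda>s. {..s})"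
  have norm_G: "(\<Sum>l\<le>s. norm (G (s, l))) = norm (a s) * (cmod z0 + cmod w) ^ s" for s
  proof -
    have "(\<Sum>l\<le>s. norm (G (s, l)))
        = (\<Sum>l\<le>s. norm (a s) * (of_nat (s choose l) * cmod w ^ l * cmod z0 ^ (s - l)))"
      by (intro sum.cong) (auto simp: G_def norm_cscaleL norm_mult norm_power)
    then show ?thesis
      by (simp add: binomial_ring sum_distrib_left add.commute)
  qed
  have "summable (\<lambda>s. norm (a s) * (cmod z0 + cmod w) ^ s)"
    by (rule summable_comparison_test'[OF summable, of 0])
       (use zw in \<open>auto intro!: mult_left_mono power_mono\<close>)
  then have "(\<lambda>x. norm (G x)) summable_on SG"
    unfolding SG_def Infinite_Sum.abs_summable_on_Sigma_iff
    by (simp add: norm_G norm_summable_imp_summable_on)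
  then have G: "G summable_on SG" by (rule abs_summable_summable)
  have sG: "(\<lambda>s. \<Sum>\<^sub>\<infinity>l\<in>{..s}. G (s, l)) summable_on UNIV"
    and "(\<Sum>\<^sub>\<infinity>s. \<Sum>\<^sub>\<infinity>l\<in>{..s}. G (s, l)) = infsum G SG"
    using summable_on_Sigma_banach[of "\<lambda>s l. G (s, l)" UNIV "\<lambda>s. {..s}"]
      infsum_Sigma'_banach[of "\<lambda>s l. G (s, l)" UNIV "\<lambda>s. {..s}"] G
    unfolding SG_def by simp_all
  moreover have "(\<Sum>\<^sub>\<infinity>l\<in>{..s}. G (s, l)) = cscaleL ((z0 + w) ^ s) (a s)" for s
    by (simp add: G_def cscaleL_sum_left binomial_ring algebra_simps)
  ultimately have by_s: "(\<lambda>s. cscaleL ((z0 + w) ^ s) (a s)) sums infsum G SG"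
    using has_sum_imp_sums[OF has_sum_infsum[OF sG]] by simp
  have "F summable_on UNIV \<longleftrightarrow> G summable_on SG"
    by (rule summable_on_reindex_bij_witness[where i="\<lambda>(s, l). (l, s - l)" and j="\<lambda>(l, r). (l + r, l)"])
       (auto simp: SG_def F_def G_def)
  with G have F: "F summable_on UNIV" by simp
  have "infsum F UNIV = infsum G SG"
    by (rule infsum_reindex_bij_witness[where i="\<lambda>(s, l). (l, s - l)" and j="\<lambda>(l, r). (l + r, l)"])
       (auto simp: SG_def F_def G_def)
  moreover have sF: "(\<lambda>l. \<Sum>\<^sub>\<infinity>r. F (l, r)) summable_on UNIV"
    and "(\<Sum>\<^sub>\<infinity>l. \<Sum>\<^sub>\<infinity>r. F (l, r)) = infsum F UNIV"
    using summable_on_Sigma_banach[of "\<lambda>l r. F (l, r)" UNIV "\<lambda>_. UNIV"]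
      infsum_Sigma'_banach[of "\<lambda>l r. F (l, r)" UNIV "\<lambda>_. UNIV"] F
    by simp_all
  moreover have "(\<Sum>\<^sub>\<infinity>r. F (l, r))
      = cscaleL (w ^ l) (\<Sum>r. cscaleL (of_nat ((l + r) choose l) * z0 ^ r) (a (l + r)))" for l
  proof -
    define b where "b r = cscaleL (of_nat ((l + r) choose l) * z0 ^ r) (a (l + r))" for r
    have "summable (\<lambda>r. norm (b r))"
      unfolding b_def by (rule summable_norm_taylor_coeff[OF summable z0])
    then have "(b has_sum suminf b) UNIV"
      by (intro norm_summable_imp_has_sum) (auto intro: summable_sums summable_norm_cancel)
    then have "((\<lambda>r. cscaleL (w ^ l) (b r)) has_sum cscaleL (w ^ l) (suminf b)) UNIV"
      by (rule has_sum_bounded_linear[OF bounded_linear_cscaleL])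
    moreover have "cscaleL (w ^ l) (b r) = F (l, r)" for r
      by (simp add: b_def F_def cscaleL_cscaleL)
    ultimately show ?thesis
      unfolding b_def by (simp add: infsumI)
  qed
  ultimately show ?thesis
    using has_sum_imp_sums[OF has_sum_infsum[OF sF]] by_s by (simp add: sums_iff)
qed

lemma negative_binomial_sums:
  fixes q :: real
  assumes q: "0 \<le> q" "q < 1"
  shows "(\<lambda>r. real ((l + r) choose l) * q ^ r) sums (1 / (1 - q) ^ (l + 1))"
proof -
  have "(\<lambda>n. ((- (real l + 1)) gchoose n) * (- q) ^ n) sums (1 + - q) powr (- (real l + 1))"
    by (rule gen_binomial_real) (use q in simp)
  moreover have "((- (real l + 1)) gchoose n) * (- q) ^ n = real ((l + n) choose l) * q ^ n" for n
  proof -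
    have "(- (real l + 1)) gchoose n = (- 1) ^ n * ((real l + 1 + of_nat n - 1) gchoose n)"
      by (rule gbinomial_minus)
    also have "real l + 1 + of_nat n - 1 = real (l + n)" by simp
    also have "real (l + n) gchoose n = real ((l + n) choose n)"
      by (rule binomial_gbinomial[symmetric])
    also have "(l + n) choose n = (l + n) choose l"
      using binomial_symmetric[of n "l + n"] by simp
    finally show ?thesis
      by (simp add: power_minus[of q])
  qed
  moreover have "(1 + - q) powr (- (real l + 1)) = 1 / (1 - q) ^ (l + 1)"
  proof -
    have "(1 + - q) powr (- (real l + 1)) = inverse ((1 - q) powr real (l + 1))"
      by (simp add: powr_minus [symmetric] algebra_simps)
    also have "(1 - q) powr real (l + 1) = (1 - q) ^ (l + 1)"
      by (rule powr_realpow) (use q in simp)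
    finally show ?thesis by (simp add: inverse_eq_divide)
  qed
  ultimately show ?thesis by simp
qed

section \<open>Laurent series\<close>

lemma has_sum_sum:
  fixes f :: "'i \<Rightarrow> 'a \<Rightarrow> 'b::topological_comm_monoid_add"
  assumes "finite K" "\<And>k. k \<in> K \<Longrightarrow> (f k has_sum s k) A"
  shows "((\<lambda>x. \<Sum>k\<in>K. f k x) has_sum (\<Sum>k\<in>K. s k)) A"
  using assms by (induction K rule: finite_induct) (auto intro: has_sum_add)

lemma has_sum_delta: "((\<lambda>j. if j = n then X else 0) has_sum X) UNIV"
  by (rule has_sum_finite_neutralI[of "{n}"]) auto

lemma minus_int_Suc: "- int m - 1 = - int (Suc m)"
  by simp

lemma has_sum_int_shift:
  fixes f :: "int \<Rightarrow> 'a::topological_comm_monoid_add"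
  shows "(f has_sum S) UNIV \<longleftrightarrow> ((\<lambda>j. f (j - 1)) has_sum S) UNIV"
  by (rule has_sum_reindex_bij_witness[where i="\<lambda>j. j - 1" and j="\<lambda>j. j + 1"]) auto

lemma int_range_split: "range int \<union> range (\<lambda>n. - int (Suc n)) = UNIV"
proof -
  have "j \<in> range int \<union> range (\<lambda>n. - int (Suc n))" for j :: int
  proof (cases "j \<ge> 0")
    case True then show ?thesis by (auto intro: image_eqI[of _ _ "nat j"])
  next
    case False then show ?thesis by (auto intro!: image_eqI[of _ _ "nat (- j - 1)"])
  qed
  then show ?thesis by blast
qed

lemma has_sum_int_imp_sums:
  fixes f :: "int \<Rightarrow> 'a::banach"
  assumes "(f has_sum s) UNIV"
  obtains P M where "(\<lambda>n. f (int n)) sums P" "(\<lambda>n. f (- int (Suc n))) sums M" "s = P + M"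
proof -
  define A where "A = range int"
  define B where "B = range (\<lambda>n. - int (Suc n))"
  have "f summable_on UNIV" using assms by (auto simp: summable_on_def)
  then have A: "f summable_on A" and B: "f summable_on B"
    by (auto intro: summable_on_subset_banach)
  have "((\<lambda>n. f (int n)) has_sum infsum f A) UNIV"
    using has_sum_infsum[OF A] unfolding A_def
    by (subst (asm) has_sum_reindex) (auto simp: inj_on_def o_def)
  moreover have "((\<lambda>n. f (- int (Suc n))) has_sum infsum f B) UNIV"
    using has_sum_infsum[OF B] unfolding B_def
    by (subst (asm) has_sum_reindex) (auto simp: inj_on_def o_def)
  moreover have "A \<inter> B = {}" by (auto simp: A_def B_def)
  then have "s = infsum f A + infsum f B"
    using infsumI[OF assms] infsum_Un_disjoint[OF A B] int_range_split
    unfolding A_def B_def by (simp only:)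
  ultimately show ?thesis
    using that has_sum_imp_sums by blast
qed

lemma summable_on_int_if_summable_halves:
  fixes g :: "int \<Rightarrow> real"
  assumes "summable (\<lambda>n. g (int n))" "summable (\<lambda>n. g (- int (Suc n)))" "\<And>j. g j \<ge> 0"
  shows "g summable_on UNIV"
proof -
  have "(g \<circ> int) summable_on UNIV"
    by (rule norm_summable_imp_summable_on) (use assms in simp)
  then have A: "g summable_on range int"
    by (subst summable_on_reindex) (auto simp: inj_on_def)
  have "(g \<circ> (\<lambda>n. - int (Suc n))) summable_on UNIV"
    by (rule norm_summable_imp_summable_on) (use assms in \<open>simp add: o_def\<close>)
  then have B: "g summable_on range (\<lambda>n. - int (Suc n))"
    by (subst summable_on_reindex) (auto simp: inj_on_def)
  have "g summable_on (range int \<union> range (\<lambda>n. - int (Suc n)))"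
    by (rule summable_on_Un_disjoint[OF A B]) auto
  then show ?thesis by (simp only: int_range_split)
qed

lemma summable_on_int_bounded:
  fixes f :: "int \<Rightarrow> 'a::banach"
  assumes "f summable_on UNIV"
  obtains K where "\<And>j. norm (f j) \<le> K"
proof -
  have "f summable_on range int" "f summable_on range (\<lambda>n. - int n)"
    using assms by (auto intro: summable_on_subset_banach)
  then have "summable (f \<circ> int)" "summable (f \<circ> (\<lambda>n. - int n))"
    by (auto intro!: summable_on_imp_summable simp: summable_on_reindex inj_on_def)
  then obtain K1 K2 where K1: "\<And>n. norm (f (int n)) \<le> K1" and K2: "\<And>n. norm (f (- int n)) \<le> K2"
    by (metis Bseq_def summable_imp_Bseq comp_apply)
  have "norm (f j) \<le> max K1 K2" for j
  proof (cases "j \<ge> 0")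
    case True
    then show ?thesis using K1[of "nat j"] by simp
  next
    case False
    then show ?thesis using K2[of "nat (- j)"] by simp
  qed
  then show ?thesis using that by blast
qed

lemma sum_roots_of_unity_power:
  assumes M: "M > (0::nat)"
  shows "(\<Sum>k<M. cis (2*pi*real k * of_int m / real M)) = (if int M dvd m then of_nat M else 0)"
proof -
  define x where "x = cis (2*pi* of_int m / real M)"
  have xk: "cis (2*pi*real k * of_int m / real M) = x ^ k" for k
    unfolding x_def Complex.DeMoivre by (simp add: algebra_simps)
  have xM: "x ^ M = 1"
  proof -
    have "x ^ M = cis (2 * pi * of_int m)" unfolding x_def Complex.DeMoivre using M by simp
    also have "\<dots> = 1" by (rule cis_multiple_2pi) simp
    finally show ?thesis .
  qed
  show ?thesis
  proof (cases "int M dvd m")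
    case True
    then obtain q where q: "m = int M * q" by (auto elim: dvdE)
    have "x = cis (2 * pi * of_int q)" using M unfolding x_def q by (simp add: field_simps)
    also have "\<dots> = 1" by (rule cis_multiple_2pi) simp
    finally have "x = 1" .
    then show ?thesis using True by (simp add: xk)
  next
    case False
    have "x \<noteq> 1"
    proof
      assume "x = 1"
      then have "exp (\<i> * complex_of_real (2*pi* of_int m / real M)) = 1" by (simp add: x_def cis_conv_exp)
      then obtain q :: int where q: "2*pi* of_int m / real M = of_int (2*q) * pi"
        unfolding exp_eq_1 by auto
      then have "of_int m = real M * of_int q" using M by (simp add: field_simps)
      then have "m = int M * q" by (metis of_int_eq_iff of_int_mult of_int_of_nat_eq)
      then show False using False by simp
    qed
    then have "(\<Sum>k<M. x ^ k) = 0" using xM by (simp add: geometric_sum)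
    then show ?thesis using False by (simp add: xk)
  qed
qed

lemma roots_of_unity_filter:
  assumes M: "M > (0::nat)" and rho: "\<rho> > 0"
  shows "(\<Sum>k<M. (cis (-(2*pi*real k * of_int n/real M)) / of_nat M) * (complex_of_real \<rho> * cis (2*pi*real k/real M)) powi j)
        = (if int M dvd (j - n) then complex_of_real \<rho> powi j else 0)"
proof -
  have "(cis (-(2*pi*real k * of_int n/real M)) / of_nat M) * (complex_of_real \<rho> * cis (2*pi*real k/real M)) powi j
       = (complex_of_real \<rho> powi j / of_nat M) * cis (2*pi*real k * of_int (j - n) / real M)" for k
  proof -
    have "(complex_of_real \<rho> * cis (2*pi*real k/real M)) powi j = complex_of_real \<rho> powi j * cis (of_int j * (2*pi*real k/real M))"
      by (simp add: power_int_mult_distrib cis_power_int)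
    moreover have "cis (-(2*pi*real k * of_int n/real M)) * cis (of_int j * (2*pi*real k/real M)) = cis (2*pi*real k * of_int (j - n) / real M)"
      by (simp add: cis_mult field_simps diff_divide_distrib)
    ultimately show ?thesis by (simp add: field_simps)
  qed
  then have "(\<Sum>k<M. (cis (-(2*pi*real k * of_int n/real M)) / of_nat M) * (complex_of_real \<rho> * cis (2*pi*real k/real M)) powi j)
     = (\<Sum>k<M. (complex_of_real \<rho> powi j / of_nat M) * cis (2*pi*real k * of_int (j - n) / real M))"
    by (intro sum.cong) auto
  also have "\<dots> = (complex_of_real \<rho> powi j / of_nat M) * (\<Sum>k<M. cis (2*pi*real k * of_int (j - n) / real M))"
    by (rule sum_distrib_left[symmetric])
  also have "\<dots> = (if int M dvd (j - n) then complex_of_real \<rho> powi j else 0)"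
    unfolding sum_roots_of_unity_power[OF M, of "j - n"] using M by simp
  finally show ?thesis .
qed

text \<open>Averaging a Laurent series over the \<open>M\<close>-th roots of unity, weighted by \<open>\<zeta>\<^sup>-\<^sup>n\<close>,
  keeps exactly the coefficients with index \<open>\<equiv> n (mod M)\<close>.\<close>

lemma laurent_series_filter:
  fixes B :: "int \<Rightarrow> ('a::real_normed_vector \<Rightarrow>\<^sub>L 'b::complex_banach)"
  assumes M: "M > 0" and rho: "\<rho> > 0"
    and zero: "\<And>w. cmod w = \<rho> \<Longrightarrow> ((\<lambda>j. cscaleL (w powi j) (B j)) has_sum 0) UNIV"
  shows "((\<lambda>j. if int M dvd (j - n) then cscaleL (complex_of_real \<rho> powi j) (B j) else 0) has_sum 0) UNIV"
proof -
  define w where "w k = complex_of_real \<rho> * cis (2 * pi * real k / real M)" for k :: nat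
  define c where "c k = cis (- (2 * pi * real k * of_int n / real M)) / of_nat M" for k :: nat
  have "cmod (w k) = \<rho>" for k using rho by (simp add: w_def norm_mult)
  then have "((\<lambda>j. \<Sum>k<M. cscaleL (c k) (cscaleL (w k powi j) (B j))) has_sum (\<Sum>k<M. cscaleL (c k) 0)) UNIV"
    by (intro has_sum_sum has_sum_bounded_linear[OF bounded_linear_cscaleL] zero) auto
  moreover have "(\<Sum>k<M. cscaleL (c k) (cscaleL (w k powi j) (B j)))
      = (if int M dvd (j - n) then cscaleL (complex_of_real \<rho> powi j) (B j) else 0)" for j
  proof -
    have "(\<Sum>k<M. cscaleL (c k) (cscaleL (w k powi j) (B j))) = cscaleL (\<Sum>k<M. c k * w k powi j) (B j)"
      by (simp add: cscaleL_cscaleL cscaleL_sum_left)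
    also have "(\<Sum>k<M. c k * w k powi j) = (if int M dvd (j - n) then complex_of_real \<rho> powi j else 0)"
      unfolding c_def w_def by (rule roots_of_unity_filter[OF M rho])
    finally show ?thesis by simp
  qed
  ultimately show ?thesis by simp
qed

text \<open>Filtering with \<open>M\<close> larger than the indices
  of a finite set carrying all but \<open>e\<close> of the mass isolates the \<open>n\<close>-th term up to \<open>e\<close>.\<close>

lemma laurent_coeffs_eq_0:
  fixes B :: "int \<Rightarrow> ('a::real_normed_vector \<Rightarrow>\<^sub>L 'b::complex_banach)"
  assumes rho: "\<rho> > 0"
    and abs: "(\<lambda>j. norm (B j) * \<rho> powi j) summable_on UNIV"
    and zero: "\<And>w. cmod w = \<rho> \<Longrightarrow> ((\<lambda>j. cscaleL (w powi j) (B j)) has_sum 0) UNIV"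
  shows "B n = 0"
proof -
  define g where "g j = norm (B j) * \<rho> powi j" for j
  have g: "g summable_on UNIV" using abs by (simp add: g_def[abs_def])
  have "norm (B n) * \<rho> powi n \<le> e" if e: "e > 0" for e
  proof -
    obtain F where F: "finite F" "dist (sum g F) (infsum g UNIV) \<le> e"
      using infsum_finite_approximation[OF g e] by blast
    define M where "M = nat (Max (insert 0 ((\<lambda>j. \<bar>j - n\<bar>) ` F)) + 1)"
    have "Max (insert 0 ((\<lambda>j. \<bar>j - n\<bar>) ` F)) \<ge> 0" by (rule Max_ge) (use F(1) in auto)
    then have M: "M > 0" by (simp add: M_def)
    have MF: "\<bar>j - n\<bar> < int M" if "j \<in> F" for j
    proof -
      have "\<bar>j - n\<bar> \<le> Max (insert 0 ((\<lambda>j. \<bar>j - n\<bar>) ` F))" using F(1) that by (intro Max_ge) auto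
      with \<open>Max _ \<ge> 0\<close> show ?thesis unfolding M_def by simp
    qed
    define G where "G = {j. j \<noteq> n \<and> int M dvd (j - n)}"
    have GF: "G \<inter> F = {}"
    proof (rule ccontr)
      assume "G \<inter> F \<noteq> {}"
      then obtain j where j: "j \<in> G" "j \<in> F" by blast
      then have "int M \<le> \<bar>j - n\<bar>" using dvd_imp_le_int[of "j - n" "int M"] by (simp add: G_def)
      with MF[OF j(2)] show False by simp
    qed
    define b where "b j = cscaleL (complex_of_real \<rho> powi j) (B j)" for j
    have "((\<lambda>j. (if int M dvd (j - n) then b j else 0) + - (if j = n then b n else 0)) has_sum (0 + - b n)) UNIV"
      using has_sum_add[OF laurent_series_filter[OF M rho zero, unfolded b_def[symmetric]]
          has_sum_uminus[THEN iffD2]] has_sum_delta[of n "b n"] by simp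
    moreover have "(if int M dvd (j - n) then b j else 0) + - (if j = n then b n else 0)
        = (if j \<in> G then b j else 0)" for j
      by (auto simp: G_def)
    ultimately have hb: "((\<lambda>j. if j \<in> G then b j else 0) has_sum - b n) UNIV" by simp
    have norm_b: "norm (b j) = g j" for j
      using rho by (simp add: b_def g_def norm_cscaleL norm_power_int mult.commute)
    have "((\<lambda>j. norm (if j \<in> G then b j else 0)) has_sum infsum g G) UNIV"
    proof -
      have "(\<lambda>j. norm (if j \<in> G then b j else 0)) = (\<lambda>j. if j \<in> G then g j else 0)"
        by (auto simp: norm_b)
      then show ?thesis
        using has_sum_cong_neutral[of UNIV G "\<lambda>j. if j \<in> G then g j else 0" g]
          has_sum_infsum[OF summable_on_subset_banach[OF g]] by auto
    qed
    then have "norm (- b n) \<le> infsum g G"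
      using hb by (rule norm_has_sum_bound)
    moreover have "norm (- b n) = norm (B n) * \<rho> powi n"
      using norm_b[of n] by (simp add: g_def)
    moreover have "infsum g G + infsum g F \<le> infsum g UNIV"
      using infsum_Un_disjoint[of g G F] infsum_mono2[of g "G \<union> F" UNIV]
        summable_on_subset_banach[OF g] GF F(1) g rho by (auto simp: g_def)
    ultimately show ?thesis
      using F by (simp add: dist_real_def)
  qed
  then have "norm (B n) * \<rho> powi n \<le> 0"
    by (metis dense not_le)
  moreover have "\<rho> powi n > 0" using rho by simp
  ultimately show "B n = 0"
    by (simp add: mult_le_0_iff)
qed

lemma has_sum_laurent_shift:
  fixes X :: "int \<Rightarrow> ('a::real_normed_vector \<Rightarrow>\<^sub>L 'b::complex_banach)"
  assumes "((\<lambda>j. cscaleL (w powi j) (X j)) has_sum S) UNIV" "w \<noteq> 0"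
  shows "((\<lambda>j. cscaleL (w powi j) (X (j - 1))) has_sum cscaleL w S) UNIV"
proof -
  have "((\<lambda>j. cscaleL (w powi (j + 1)) (X j)) has_sum cscaleL w S) UNIV"
    using has_sum_bounded_linear[OF bounded_linear_cscaleL assms(1), of w] assms(2)
    by (simp add: cscaleL_cscaleL power_int_add_1')
  then show ?thesis
    by (subst (asm) has_sum_int_shift) simp
qed

lemma has_sum_laurent_identity:
  fixes X Y :: "int \<Rightarrow> ('a::complex_banach \<Rightarrow>\<^sub>L 'a)"
  assumes "((\<lambda>j. cscaleL (w powi j) (X j)) has_sum S1) UNIV"
    and "((\<lambda>j. cscaleL (w powi j) (Y j)) has_sum S2) UNIV" "w \<noteq> 0"
  shows "((\<lambda>j. cscaleL (w powi j) (X j + Y (j - 1) - (if j = 0 then id_blinfun else 0)))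
      has_sum (S1 + cscaleL w S2 - id_blinfun)) UNIV"
proof -
  have delta: "(\<lambda>j. cscaleL (w powi j) (if j = 0 then id_blinfun else 0)) = (\<lambda>j. if j = 0 then id_blinfun else 0)"
    by auto
  have "((\<lambda>j. cscaleL (w powi j) (if j = 0 then id_blinfun else 0)) has_sum id_blinfun) UNIV"
    unfolding delta by (rule has_sum_delta)
  then have "((\<lambda>j. - cscaleL (w powi j) (if j = 0 then id_blinfun else 0)) has_sum - id_blinfun) UNIV"
    by (simp add: has_sum_uminus)
  from has_sum_add[OF has_sum_add[OF assms(1) has_sum_laurent_shift[OF assms(2,3)]] this]
  show ?thesis
    by (simp add: cscaleL_add_right cscaleL_diff_right)
qed

section \<open>The resolvent of the pencil near its pole\<close>

locale pencil_resolvent =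
  fixes A0 A1 :: "'x::complex_banach \<Rightarrow>\<^sub>L 'y::complex_banach"
    and R :: "complex \<Rightarrow> ('y \<Rightarrow>\<^sub>L 'x)"
    and T :: "int \<Rightarrow> ('y \<Rightarrow>\<^sub>L 'x)"
    and \<epsilon> c :: real
  assumes A0_lin: "clinear_op A0" and A1_lin: "clinear_op A1"
    and eps_pos: "\<epsilon> > 0"
    and R_inv: "\<forall>z. cmod z < 1 + \<epsilon> \<and> z \<noteq> 1 \<longrightarrow>
                  R z o\<^sub>L (A0 + cscaleL z A1) = id_blinfun \<and> (A0 + cscaleL z A1) o\<^sub>L R z = id_blinfun"
    and R_analytic: "op_analytic_on {z. cmod z < 1 + \<epsilon> \<and> z \<noteq> 1} R"
    and T_lin: "\<forall>j. clinear_op (T j)"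
    and Laurent: "\<forall>z. 0 < cmod (z - 1) \<and> cmod (z - 1) < \<epsilon> \<longrightarrow>
                  ((\<lambda>j. cscaleL ((z - 1) powi j) (T j)) has_sum R z) UNIV"
    and Q_bound_unfolded: "\<forall>s. norm ((- 1::real) ^ s *\<^sub>R (opow (op_inv A0 o\<^sub>L A1) s o\<^sub>L op_inv A0)
      + (opow (op_inv (id_blinfun - (T (- 1) o\<^sub>L (A0 + A1)))) (s + 1) o\<^sub>L T (- 1))) \<le> c / (1 + \<epsilon>) ^ s"
begin

abbreviation "C0 \<equiv> A0 + A1"
abbreviation "N \<equiv> T (- 1) o\<^sub>L C0"

lemma C0_lin: "clinear_op C0"
  using A0_lin A1_lin by (rule clinear_op_add)

lemma N_lin: "clinear_op N"
  using T_lin C0_lin by (intro clinear_op_compose) auto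

lemma R_near_1:
  assumes "0 < cmod w" "cmod w < \<epsilon>"
  shows "((\<lambda>j. cscaleL (w powi j) (T j)) has_sum R (1 + w)) UNIV"
    and "R (1 + w) o\<^sub>L (C0 + cscaleL w A1) = id_blinfun"
    and "(C0 + cscaleL w A1) o\<^sub>L R (1 + w) = id_blinfun"
    and "clinear_op (R (1 + w))"
proof -
  show "((\<lambda>j. cscaleL (w powi j) (T j)) has_sum R (1 + w)) UNIV"
    using Laurent[rule_format, of "1 + w"] assms by simp
  have eq: "A0 + cscaleL (1 + w) A1 = C0 + cscaleL w A1"
    by (simp add: cscaleL_add_left add.assoc)
  have "cmod (1 + w) < 1 + \<epsilon>" "1 + w \<noteq> 1"
    using assms norm_triangle_ineq[of 1 w] by auto
  then show "R (1 + w) o\<^sub>L (C0 + cscaleL w A1) = id_blinfun"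
    and "(C0 + cscaleL w A1) o\<^sub>L R (1 + w) = id_blinfun"
    using R_inv[rule_format, of "1 + w"] unfolding eq by auto
  then show "clinear_op (R (1 + w))"
    by (intro clinear_op_inverse[of "C0 + cscaleL w A1"] clinear_op_add clinear_op_cscaleL C0_lin A1_lin)
qed

lemma laurent_coeff_bound:
  assumes "0 < \<delta>" "\<delta> < \<epsilon>"
  obtains K where "\<And>j. norm (T j) * \<delta> powi j \<le> K"
proof -
  have "((\<lambda>j. cscaleL (complex_of_real \<delta> powi j) (T j)) has_sum R (1 + complex_of_real \<delta>)) UNIV"
    using R_near_1(1)[of "complex_of_real \<delta>"] assms by simp
  then obtain K where "\<And>j. norm (cscaleL (complex_of_real \<delta> powi j) (T j)) \<le> K"
    using summable_on_int_bounded summable_on_def by blast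
  then have "norm (T j) * \<delta> powi j \<le> K" for j
    using assms by (simp add: norm_cscaleL norm_power_int mult.commute)
  then show ?thesis using that by blast
qed

lemma laurent_abs_summable:
  assumes "0 < \<rho>" "\<rho> < \<epsilon>"
  shows "(\<lambda>j. norm (T j) * \<rho> powi j) summable_on UNIV"
proof (rule summable_on_int_if_summable_halves)
  define \<rho>' where "\<rho>' = (\<rho> + \<epsilon>) / 2"
  have \<rho>': "\<rho> < \<rho>'" "\<rho>' < \<epsilon>" using assms by (auto simp: \<rho>'_def)
  obtain K1 where K1: "\<And>j. norm (T j) * (\<rho> / 2) powi j \<le> K1"
    using laurent_coeff_bound[of "\<rho> / 2"] assms by auto
  obtain K2 where K2: "\<And>j. norm (T j) * \<rho>' powi j \<le> K2"
    using laurent_coeff_bound[of \<rho>'] assms \<rho>' by auto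
  have "summable (\<lambda>n. norm (T (int n)) * \<rho> ^ n)"
    by (rule summable_norm_mult_power_less[of _ \<rho>' K2]) (use K2[of "int _"] assms \<rho>' in auto)
  then show "summable (\<lambda>n. norm (T (int n)) * \<rho> powi int n)"
    by simp
  show "summable (\<lambda>n. norm (T (- int (Suc n))) * \<rho> powi (- int (Suc n)))"
  proof (rule summable_comparison_test'[where N = 0])
    show "summable (\<lambda>n. K1 * (1 / 2) ^ Suc n)"
      by (intro summable_mult summable_geometric_iff[THEN iffD2] summable_Suc_iff[THEN iffD2]) auto
    fix n
    have "norm (norm (T (- int (Suc n))) * \<rho> powi (- int (Suc n)))
        = (norm (T (- int (Suc n))) * (\<rho> / 2) powi (- int (Suc n))) * (1 / 2) ^ Suc n"
    proof -
      have "\<rho> powi (- int (Suc n)) = 1 / \<rho> ^ Suc n" "(\<rho> / 2) powi (- int (Suc n)) = 1 / (\<rho> / 2) ^ Suc n"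
        by (simp_all only: power_int_minus power_int_of_nat divide_inverse mult_1)
      then show ?thesis using assms by (simp add: power_divide)
    qed
    also have "\<dots> \<le> K1 * (1 / 2) ^ Suc n"
      using K1 by (intro mult_right_mono) auto
    finally show "norm (norm (T (- int (Suc n))) * \<rho> powi (- int (Suc n))) \<le> K1 * (1 / 2) ^ Suc n" .
  qed
qed (use assms in simp)

lemma laurent_coeffs_vanish:
  fixes B :: "int \<Rightarrow> ('a::real_normed_vector \<Rightarrow>\<^sub>L 'b::complex_banach)"
  assumes bound: "\<And>j. norm (B j) \<le> k * (norm (T j) + norm (T (j - 1))) + (if j = 0 then 1 else 0)"
    and "k \<ge> 0"
    and zero: "\<And>w. 0 < cmod w \<Longrightarrow> cmod w < \<epsilon> \<Longrightarrow> ((\<lambda>j. cscaleL (w powi j) (B j)) has_sum 0) UNIV"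
  shows "B j = 0"
proof (rule laurent_coeffs_eq_0)
  define \<rho> where "\<rho> = \<epsilon> / 2"
  have \<rho>: "0 < \<rho>" "\<rho> < \<epsilon>" using eps_pos by (auto simp: \<rho>_def)
  then show "((\<lambda>j. cscaleL (w powi j) (B j)) has_sum 0) UNIV" if "cmod w = \<rho>" for w
    using zero[of w] that \<rho> by auto
  define g where "g j = norm (T j) * \<rho> powi j" for j
  have g: "g summable_on UNIV" unfolding g_def by (rule laurent_abs_summable[OF \<rho>])
  then have "(\<lambda>j. g (j - 1)) summable_on UNIV"
    using has_sum_int_shift unfolding summable_on_def by blast
  moreover have "(\<lambda>j. if j = 0 then 1 else (0::real)) summable_on UNIV"
    using has_sum_delta[of 0 "1::real"] unfolding summable_on_def by blast
  ultimately have "(\<lambda>j. k * g j + (k * \<rho>) * g (j - 1) + (if j = 0 then 1 else 0)) summable_on UNIV"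
    using g by (intro summable_on_add summable_on_cmult_right)
  then show "(\<lambda>j. norm (B j) * \<rho> powi j) summable_on UNIV"
  proof (rule summable_on_comparison_test)
    fix j :: int
    show "0 \<le> norm (B j) * \<rho> powi j" using \<rho> by simp
    have "\<rho> powi j = \<rho> * \<rho> powi (j - 1)"
      using power_int_add_1'[of \<rho> "j - 1"] \<rho> by simp
    then have "(k * (norm (T j) + norm (T (j - 1))) + (if j = 0 then 1 else 0)) * \<rho> powi j
        = k * g j + (k * \<rho>) * g (j - 1) + (if j = 0 then 1 else 0)"
      by (cases "j = 0") (simp_all add: g_def algebra_simps)
    moreover have "norm (B j) * \<rho> powi j
        \<le> (k * (norm (T j) + norm (T (j - 1))) + (if j = 0 then 1 else 0)) * \<rho> powi j"
      using bound \<rho> by (intro mult_right_mono) auto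
    ultimately show "norm (B j) * \<rho> powi j \<le> k * g j + (k * \<rho>) * g (j - 1) + (if j = 0 then 1 else 0)"
      by simp
  qed
qed (use eps_pos in simp)

end

lemma mult_less_1_if_less_inverse:
  fixes a b :: real
  assumes "0 \<le> a" "0 \<le> b" "a < 1 / (b + 1)"
  shows "a * b < 1"
proof -
  have "a * (b + 1) < 1"
    using assms by (simp add: pos_less_divide_eq add_nonneg_pos)
  moreover have "a * b \<le> a * (b + 1)"
    using assms(1) by (simp add: algebra_simps)
  ultimately show ?thesis by linarith
qed

context pencil_resolvent
begin

text \<open>Coefficients of \<open>R(z) A(z) = I\<close> and \<open>A(z) R(z) = I\<close> with \<open>A(z) = C\<^sub>0 + (z - 1) A\<^sub>1\<close>.\<close>

lemma laurent_left_identity: "(T j o\<^sub>L C0) + (T (j - 1) o\<^sub>L A1) = (if j = 0 then id_blinfun else 0)"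
proof -
  define B where "B j = (T j o\<^sub>L C0) + (T (j - 1) o\<^sub>L A1) - (if j = 0 then id_blinfun else 0)" for j
  have "B j = 0"
  proof (rule laurent_coeffs_vanish[where k = "norm C0 + norm A1"])
    fix j
    have "norm (B j) \<le> norm (T j o\<^sub>L C0) + norm (T (j - 1) o\<^sub>L A1) + (if j = 0 then 1 else 0)"
      unfolding B_def using norm_triangle_ineq4 norm_triangle_ineq norm_blinfun_id_le
      by (smt (verit) norm_zero)
    also have "\<dots> \<le> (norm C0 + norm A1) * (norm (T j) + norm (T (j - 1))) + (if j = 0 then 1 else 0)"
      using norm_blinfun_compose[of "T j" C0] norm_blinfun_compose[of "T (j - 1)" A1]
        mult_nonneg_nonneg[OF norm_ge_zero[of A1] norm_ge_zero[of "T j"]]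
        mult_nonneg_nonneg[OF norm_ge_zero[of C0] norm_ge_zero[of "T (j - 1)"]]
      by (simp add: algebra_simps, linarith)
    finally show "norm (B j) \<le> (norm C0 + norm A1) * (norm (T j) + norm (T (j - 1))) + (if j = 0 then 1 else 0)" .
  next
    fix w :: complex assume w: "0 < cmod w" "cmod w < \<epsilon>"
    note R = R_near_1[OF w]
    have "((\<lambda>j. cscaleL (w powi j) (T j o\<^sub>L X)) has_sum (R (1 + w) o\<^sub>L X)) UNIV" for X
      using has_sum_bounded_linear[OF blinfun_compose.bounded_linear_left R(1)]
      by (simp add: cscaleL_compose_left)
    from has_sum_laurent_identity[OF this this, of C0 A1] w
    have "((\<lambda>j. cscaleL (w powi j) (B j)) has_sum ((R (1 + w) o\<^sub>L (C0 + cscaleL w A1)) - id_blinfun)) UNIV"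
      by (simp add: B_def blinfun_compose.add_right cscaleL_compose_right[OF R(4)])
    then show "((\<lambda>j. cscaleL (w powi j) (B j)) has_sum 0) UNIV"
      using R(2) by simp
  qed simp
  then show ?thesis by (simp add: B_def)
qed

lemma laurent_right_identity: "(C0 o\<^sub>L T j) + (A1 o\<^sub>L T (j - 1)) = (if j = 0 then id_blinfun else 0)"
proof -
  define B where "B j = (C0 o\<^sub>L T j) + (A1 o\<^sub>L T (j - 1)) - (if j = 0 then id_blinfun else 0)" for j
  have "B j = 0"
  proof (rule laurent_coeffs_vanish[where k = "norm C0 + norm A1"])
    fix j
    have "norm (B j) \<le> norm (C0 o\<^sub>L T j) + norm (A1 o\<^sub>L T (j - 1)) + (if j = 0 then 1 else 0)"
      unfolding B_def using norm_triangle_ineq4 norm_triangle_ineq norm_blinfun_id_le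
      by (smt (verit) norm_zero)
    also have "\<dots> \<le> (norm C0 + norm A1) * (norm (T j) + norm (T (j - 1))) + (if j = 0 then 1 else 0)"
      using norm_blinfun_compose[of C0 "T j"] norm_blinfun_compose[of A1 "T (j - 1)"]
        mult_nonneg_nonneg[OF norm_ge_zero[of A1] norm_ge_zero[of "T j"]]
        mult_nonneg_nonneg[OF norm_ge_zero[of C0] norm_ge_zero[of "T (j - 1)"]]
      by (simp add: algebra_simps, linarith)
    finally show "norm (B j) \<le> (norm C0 + norm A1) * (norm (T j) + norm (T (j - 1))) + (if j = 0 then 1 else 0)" .
  next
    fix w :: complex assume w: "0 < cmod w" "cmod w < \<epsilon>"
    note R = R_near_1[OF w]
    have "((\<lambda>j. cscaleL (w powi j) (X o\<^sub>L T j)) has_sum (X o\<^sub>L R (1 + w))) UNIV" if "clinear_op X" for X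
      using has_sum_bounded_linear[OF blinfun_compose.bounded_linear_right R(1), of X]
      by (simp add: cscaleL_compose_right[OF that])
    from has_sum_laurent_identity[OF this[OF C0_lin] this[OF A1_lin]] w
    have "((\<lambda>j. cscaleL (w powi j) (B j)) has_sum (((C0 + cscaleL w A1) o\<^sub>L R (1 + w)) - id_blinfun)) UNIV"
      by (simp add: B_def blinfun_compose.add_left cscaleL_compose_left)
    then show "((\<lambda>j. cscaleL (w powi j) (B j)) has_sum 0) UNIV"
      using R(3) by simp
  qed simp
  then show ?thesis by (simp add: B_def)
qed

lemma laurent_coeff_neg_bound:
  assumes "0 < \<delta>" "\<delta> < \<epsilon>"
  obtains K where "\<And>m. norm (T (- int m)) \<le> K * \<delta> ^ m"
proof -
  obtain K where K: "\<And>j. norm (T j) * \<delta> powi j \<le> K"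
    using laurent_coeff_bound[OF assms] by blast
  have "norm (T (- int m)) \<le> K * \<delta> ^ m" for m
  proof -
    have "\<delta> powi (- int m) = 1 / \<delta> ^ m"
      by (simp only: power_int_minus power_int_of_nat divide_inverse mult_1)
    then have "norm (T (- int m)) / \<delta> ^ m \<le> K"
      using K[of "- int m"] by simp
    then show ?thesis
      using assms by (simp add: field_simps)
  qed
  then show ?thesis using that by blast
qed

text \<open>\<open>T\<^sub>0 C\<^sub>0 T\<^sub>-\<^sub>m\<close> is invariant under \<open>(0, m) \<mapsto> (k, m + k)\<close> by the two coefficient
  identities, while \<open>\<parallel>T\<^sub>k\<parallel> \<parallel>T\<^sub>-\<^sub>m\<^sub>-\<^sub>k\<parallel> = O((\<delta>/\<rho>)\<^sup>k)\<close> for \<open>\<delta> < \<rho> < \<epsilon>\<close>.\<close>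

lemma T0_C0_T_neg: "m \<ge> 1 \<Longrightarrow> (T 0 o\<^sub>L C0) o\<^sub>L T (- int m) = 0"
proof -
  assume m: "m \<ge> 1"
  define a where "a k m = (T (int k) o\<^sub>L C0) o\<^sub>L T (- int m)" for k m
  have step: "a k m = a (Suc k) (Suc m)" if "m \<ge> 1" for k m
  proof -
    have C0_T: "C0 o\<^sub>L T (- int m) = - (A1 o\<^sub>L T (- int m - 1))"
      using laurent_right_identity[of "- int m"] that by (simp add: eq_neg_iff_add_eq_0)
    have T_A1: "T (int k) o\<^sub>L A1 = - (T (int k + 1) o\<^sub>L C0)"
      using laurent_left_identity[of "int k + 1"] by (simp add: eq_neg_iff_add_eq_0 add.commute)
    have "a k m = - (T (int k) o\<^sub>L (A1 o\<^sub>L T (- int m - 1)))"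
      by (simp add: a_def blinfun_compose_assoc blinfun_compose.minus_right C0_T)
    also have "\<dots> = (T (int k + 1) o\<^sub>L C0) o\<^sub>L T (- int m - 1)"
      by (simp add: T_A1 blinfun_compose.minus_left flip: blinfun_compose_assoc)
    also have "\<dots> = a (Suc k) (Suc m)"
      unfolding a_def minus_int_Suc by (simp add: add.commute)
    finally show ?thesis .
  qed
  have shift: "a 0 m = a k (m + k)" for k
  proof (induction k)
    case (Suc k)
    then show ?case using step[of "m + k" k] m by simp
  qed simp
  define \<rho> where "\<rho> = \<epsilon> / 2"
  define \<delta> where "\<delta> = \<epsilon> / 4"
  have \<rho>\<delta>: "0 < \<rho>" "\<rho> < \<epsilon>" "0 < \<delta>" "\<delta> < \<epsilon>" "\<delta> / \<rho> = 1 / 2"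
    using eps_pos by (auto simp: \<rho>_def \<delta>_def)
  obtain K1 where K1: "\<And>j. norm (T j) * \<rho> powi j \<le> K1"
    using laurent_coeff_bound[OF \<rho>\<delta>(1,2)] by blast
  obtain K2 where K2: "\<And>m. norm (T (- int m)) \<le> K2 * \<delta> ^ m"
    using laurent_coeff_neg_bound[OF \<rho>\<delta>(3,4)] by blast
  have "K1 \<ge> 0" using K1[of 0] by simp (meson order_trans norm_ge_zero)
  have bound: "norm (a 0 m) \<le> (K1 * norm C0 * K2 * \<delta> ^ m) * (1 / 2) ^ k" for k
  proof -
    have "norm (a 0 m) = norm (a k (m + k))"
      by (simp only: shift[of k])
    also have "\<dots> \<le> norm (T (int k)) * norm C0 * norm (T (- int (m + k)))"
      unfolding a_def by (meson norm_blinfun_compose mult_right_mono norm_ge_zero order.trans)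
    also have "\<dots> \<le> (K1 / \<rho> ^ k) * norm C0 * (K2 * \<delta> ^ (m + k))"
    proof (intro mult_mono)
      show "norm (T (int k)) \<le> K1 / \<rho> ^ k"
        using K1[of "int k"] \<rho>\<delta> by (simp add: field_simps)
      show "norm (T (- int (m + k))) \<le> K2 * \<delta> ^ (m + k)"
        by (rule K2)
    qed (use \<open>K1 \<ge> 0\<close> \<rho>\<delta> in auto)
    also have "\<dots> = (K1 * norm C0 * K2 * \<delta> ^ m) * (\<delta> / \<rho>) ^ k"
      using \<rho>\<delta> by (simp add: power_add power_divide field_simps)
    finally show ?thesis using \<rho>\<delta> by simp
  qed
  have "(\<lambda>k. (K1 * norm C0 * K2 * \<delta> ^ m) * (1 / 2) ^ k) \<longlonglongrightarrow> (K1 * norm C0 * K2 * \<delta> ^ m) * 0"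
    by (intro tendsto_mult tendsto_const LIMSEQ_power_zero) auto
  then have "norm (a 0 m) \<le> K1 * norm C0 * K2 * \<delta> ^ m * 0"
    by (rule LIMSEQ_le_const) (use bound in blast)
  then show ?thesis by (simp add: a_def)
qed

lemma T_neg_Suc: "k \<ge> 1 \<Longrightarrow> T (- int k - 1) = - (N o\<^sub>L T (- int k))"
proof -
  assume k: "k \<ge> 1"
  have C0_T: "C0 o\<^sub>L T (- int k) = - (A1 o\<^sub>L T (- int k - 1))"
    using laurent_right_identity[of "- int k"] k by (simp add: eq_neg_iff_add_eq_0)
  have T_A1: "T (- 1) o\<^sub>L A1 = id_blinfun - (T 0 o\<^sub>L C0)"
    using laurent_left_identity[of 0] by (simp add: algebra_simps)
  have "(T 0 o\<^sub>L C0) o\<^sub>L T (- int k - 1) = 0"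
    using T0_C0_T_neg[of "Suc k"] by (simp only: minus_int_Suc)
  moreover have "N o\<^sub>L T (- int k) = - (T (- 1) o\<^sub>L (A1 o\<^sub>L T (- int k - 1)))"
    by (simp add: blinfun_compose_assoc blinfun_compose.minus_right C0_T)
  then have "N o\<^sub>L T (- int k) = - ((id_blinfun - (T 0 o\<^sub>L C0)) o\<^sub>L T (- int k - 1))"
    by (simp add: T_A1 flip: blinfun_compose_assoc)
  ultimately show ?thesis
    by (simp add: blinfun_compose.diff_left)
qed

lemma T_neg_eq: "T (- int (Suc k)) = (- 1) ^ k *\<^sub>R (opow N k o\<^sub>L T (- 1))"
proof (induction k)
  case (Suc k)
  have "T (- int (Suc (Suc k))) = - (N o\<^sub>L T (- int (Suc k)))"
    using T_neg_Suc[of "Suc k"] by simp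
  then show ?case
    unfolding Suc.IH by (simp add: blinfun_compose.scaleR_right opow_Suc blinfun_compose_assoc)
qed simp

text \<open>\<open>N = T\<^sub>-\<^sub>1 C\<^sub>0\<close> is quasinilpotent, since \<open>N\<^sup>k\<^sup>+\<^sup>1 = \<plusminus>T\<^sub>-\<^sub>k\<^sub>-\<^sub>1 C\<^sub>0\<close>.\<close>

lemma norm_opow_N_bound:
  assumes "0 < \<delta>" "\<delta> < \<epsilon>"
  obtains K where "\<And>k. norm (opow N k) \<le> K * \<delta> ^ k"
proof -
  obtain K where K: "\<And>m. norm (T (- int m)) \<le> K * \<delta> ^ m"
    using laurent_coeff_neg_bound[OF assms] by blast
  have "norm (opow N k) \<le> max 1 (norm C0 * K) * \<delta> ^ k" for k
  proof (cases k)
    case 0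
    then show ?thesis using norm_blinfun_id_le[where 'a = 'x] by (simp add: le_max_iff_disj)
  next
    case (Suc k')
    have "opow N k = ((- 1) ^ k' *\<^sub>R T (- int k)) o\<^sub>L C0"
      using T_neg_eq[of k'] Suc
      by (simp add: opow_Suc' blinfun_compose.scaleR_left flip: blinfun_compose_assoc)
    then have "norm (opow N k) \<le> norm (T (- int k)) * norm C0"
      using norm_blinfun_compose[of "(- 1) ^ k' *\<^sub>R T (- int k)" C0] by simp
    also have "\<dots> \<le> norm C0 * K * \<delta> ^ k"
      using K[of k] mult_right_mono[OF K[of k] norm_ge_zero[of C0]] by (simp add: algebra_simps)
    also have "\<dots> \<le> max 1 (norm C0 * K) * \<delta> ^ k"
      using assms by (intro mult_right_mono) auto
    finally show ?thesis .
  qed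
  then show ?thesis using that by blast
qed

definition N_shift :: "complex \<Rightarrow> ('x \<Rightarrow>\<^sub>L 'x)" where
  "N_shift w = cscaleL w id_blinfun + N"

text \<open>The Neumann series \<open>(w I + N)\<^sup>-\<^sup>1 = w\<^sup>-\<^sup>1 \<Sum> (-N/w)\<^sup>n\<close> converges for every \<open>w \<noteq> 0\<close>
  because \<open>N\<close> is quasinilpotent.\<close>

definition N_shift_inv :: "complex \<Rightarrow> ('x \<Rightarrow>\<^sub>L 'x)" where
  "N_shift_inv w = cscaleL (1 / w) (\<Sum>n. cscaleL ((- 1 / w) ^ n) (opow N n))"

lemma clinear_op_N_shift: "clinear_op (N_shift w)"
  unfolding N_shift_def by (intro clinear_op_add clinear_op_cscaleL N_lin clinear_op_id)

lemma N_shift_neumann: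
  assumes "w \<noteq> 0"
  defines "M \<equiv> \<Sum>n. cscaleL ((- 1 / w) ^ n) (opow N n)"
  shows "(\<lambda>n. cscaleL ((- 1 / w) ^ n) (opow N n)) sums M"
    and "(id_blinfun - cscaleL (- 1 / w) N) o\<^sub>L M = id_blinfun"
    and "M o\<^sub>L (id_blinfun - cscaleL (- 1 / w) N) = id_blinfun"
proof -
  define \<delta> where "\<delta> = min (cmod w) \<epsilon> / 2"
  have \<delta>: "0 < \<delta>" "\<delta> < \<epsilon>" "\<delta> < cmod w"
    using assms eps_pos min.cobounded1[of "cmod w" \<epsilon>] min.cobounded2[of "cmod w" \<epsilon>]
      zero_less_norm_iff[of w] unfolding \<delta>_def by linarith+
  obtain K where K: "\<And>k. norm (opow N k) \<le> K * \<delta> ^ k"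
    using norm_opow_N_bound[OF \<delta>(1,2)] by blast
  have "summable (\<lambda>n. cmod (- 1 / w) ^ n * norm (opow N n))"
  proof (rule summable_comparison_test'[where N = 0])
    show "summable (\<lambda>n. K * (\<delta> / cmod w) ^ n)"
      using \<delta> by (intro summable_mult summable_geometric) (simp add: divide_less_eq_1)
    show "norm (cmod (- 1 / w) ^ n * norm (opow N n)) \<le> K * (\<delta> / cmod w) ^ n" for n
      using mult_left_mono[OF K[of n], of "(1 / cmod w) ^ n"]
      by (simp add: norm_divide power_divide)
  qed
  from neumann_series[OF N_lin this] show
    "(\<lambda>n. cscaleL ((- 1 / w) ^ n) (opow N n)) sums M"
    "(id_blinfun - cscaleL (- 1 / w) N) o\<^sub>L M = id_blinfun"
    "M o\<^sub>L (id_blinfun - cscaleL (- 1 / w) N) = id_blinfun"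
    unfolding M_def by blast+
qed

lemma N_shift_inverse:
  assumes w: "w \<noteq> 0"
  shows "N_shift w o\<^sub>L N_shift_inv w = id_blinfun" "N_shift_inv w o\<^sub>L N_shift w = id_blinfun"
proof -
  define M where "M = (\<Sum>n. cscaleL ((- 1 / w) ^ n) (opow N n))"
  define P where "P = id_blinfun - cscaleL (- 1 / w) N"
  have PM: "P o\<^sub>L M = id_blinfun" "M o\<^sub>L P = id_blinfun"
    using N_shift_neumann[OF w] unfolding M_def P_def by auto
  have P: "clinear_op P" unfolding P_def by (intro clinear_op_diff clinear_op_id clinear_op_cscaleL N_lin)
  have "N_shift w = cscaleL w P"
    using w by (simp add: N_shift_def P_def cscaleL_diff_right cscaleL_cscaleL cscaleL_minus_one)
  moreover have "N_shift_inv w = cscaleL (1 / w) M"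
    by (simp add: N_shift_inv_def M_def)
  ultimately show "N_shift w o\<^sub>L N_shift_inv w = id_blinfun" "N_shift_inv w o\<^sub>L N_shift w = id_blinfun"
    using w PM by (simp_all add: cscaleL_compose_right[OF P] cscaleL_compose_left
        cscaleL_compose_right[OF clinear_op_inverse[OF P PM(2,1)]] cscaleL_cscaleL)
qed

lemma singular_part_sums:
  assumes w: "w \<noteq> 0"
  shows "(\<lambda>n. cscaleL (w powi (- int (Suc n))) (T (- int (Suc n)))) sums (N_shift_inv w o\<^sub>L T (- 1))"
proof -
  define M where "M = (\<Sum>n. cscaleL ((- 1 / w) ^ n) (opow N n))"
  have "(\<lambda>n. cscaleL (1 / w) (cscaleL ((- 1 / w) ^ n) (opow N n) o\<^sub>L T (- 1)))
      sums cscaleL (1 / w) (M o\<^sub>L T (- 1))"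
    using N_shift_neumann(1)[OF w] unfolding M_def[symmetric]
    by (intro bounded_linear.sums[OF bounded_linear_cscaleL]
        bounded_linear.sums[OF blinfun_compose.bounded_linear_left])
  moreover have "cscaleL (1 / w) (M o\<^sub>L T (- 1)) = N_shift_inv w o\<^sub>L T (- 1)"
    by (simp add: N_shift_inv_def M_def cscaleL_compose_left)
  moreover have "cscaleL (1 / w) (cscaleL ((- 1 / w) ^ n) (opow N n) o\<^sub>L T (- 1))
      = cscaleL (w powi (- int (Suc n))) (T (- int (Suc n)))" for n
  proof -
    have powi_eq: "w powi (- int (Suc n)) = 1 / w ^ Suc n"
      by (simp only: power_int_minus power_int_of_nat divide_inverse mult_1)
    have "(- 1 / w) ^ n = (- 1) ^ n / w ^ n"
      by (rule power_divide)
    then have coeff: "(1 / w) * (- 1 / w) ^ n = (- 1) ^ n * w powi (- int (Suc n))"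
      unfolding powi_eq using w by (simp add: field_simps)
    show ?thesis
      unfolding T_neg_eq cscaleL_compose_left cscaleL_cscaleL coeff cscaleL_sign_power ..
  qed
  ultimately show ?thesis by simp
qed

lemma N_shift_inv_sums:
  assumes "w0 \<noteq> 0" "w \<noteq> 0" "cmod (w - w0) * norm (N_shift_inv w0) < 1"
  shows "(\<lambda>n. cscaleL ((w - w0) ^ n) ((- 1::real) ^ n *\<^sub>R (opow (N_shift_inv w0) n o\<^sub>L N_shift_inv w0)))
      sums N_shift_inv w"
proof -
  have "N_shift w0 + cscaleL (w - w0) id_blinfun = N_shift w"
    by (simp add: N_shift_def algebra_simps flip: cscaleL_add_left)
  then show ?thesis
    using perturbed_inverse_sums[OF clinear_op_N_shift N_shift_inverse(2,1)[OF assms(1)] clinear_op_id,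
        of "N_shift_inv w" "w - w0"] N_shift_inverse(2)[OF assms(2)] assms(3)
    by simp
qed

definition punctured_disc :: "complex set" where
  "punctured_disc = {z. cmod z < 1 + \<epsilon> \<and> z \<noteq> 1}"

definition R_sin :: "complex \<Rightarrow> ('y \<Rightarrow>\<^sub>L 'x)" where
  "R_sin z = N_shift_inv (z - 1) o\<^sub>L T (- 1)"

definition Q :: "nat \<Rightarrow> ('y \<Rightarrow>\<^sub>L 'x)" where
  "Q s = (- 1::real) ^ s *\<^sub>R (opow (op_inv A0 o\<^sub>L A1) s o\<^sub>L op_inv A0)
       + (opow (op_inv (id_blinfun - N)) (s + 1) o\<^sub>L T (- 1))"

lemma open_punctured_disc: "open punctured_disc"
proof -
  have "punctured_disc = ball 0 (1 + \<epsilon>) - {1}" by (auto simp: punctured_disc_def)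
  then show ?thesis by (simp add: open_Diff)
qed

lemma connected_punctured_disc: "connected punctured_disc"
proof -
  have "punctured_disc = ball 0 (1 + \<epsilon>) - {1}" by (auto simp: punctured_disc_def)
  then show ?thesis
    using eps_pos by (simp add: connected_punctured_convex aff_dim_open)
qed

lemma R_sin_analytic: "op_analytic_on punctured_disc R_sin"
  unfolding op_analytic_on_def
proof
  fix z0 assume "z0 \<in> punctured_disc"
  define w0 where "w0 = z0 - 1"
  have w0: "w0 \<noteq> 0" using \<open>z0 \<in> _\<close> by (simp add: punctured_disc_def w0_def)
  define r where "r = min (cmod w0) (1 / (norm (N_shift_inv w0) + 1))"
  define a where "a n = ((- 1::real) ^ n *\<^sub>R (opow (N_shift_inv w0) n o\<^sub>L N_shift_inv w0)) o\<^sub>L T (- 1)" for n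
  have "(\<lambda>n. cscaleL ((z - z0) ^ n) (a n)) sums R_sin z" if "z \<in> ball z0 r" for z
  proof -
    have close: "cmod ((z - 1) - w0) < r"
      using that by (simp add: dist_norm norm_minus_commute w0_def)
    then have "z - 1 \<noteq> 0"
      by (auto simp: r_def)
    moreover have "cmod ((z - 1) - w0) * norm (N_shift_inv w0) < 1"
      using close by (intro mult_less_1_if_less_inverse) (simp_all add: r_def)
    ultimately show ?thesis
      using bounded_linear.sums[OF blinfun_compose.bounded_linear_left N_shift_inv_sums[OF w0], of "z - 1" "T (- 1)"]
      by (simp add: R_sin_def a_def w0_def cscaleL_compose_left)
  qed
  moreover have "r > 0" using w0 by (simp add: r_def add_nonneg_pos)
  ultimately show "\<exists>r>0. \<exists>a. \<forall>z\<in>ball z0 r. (\<lambda>n. cscaleL ((z - z0) ^ n) (a n)) sums R_sin z"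
    by blast
qed

lemma R_taylor_at_0:
  assumes "cmod z < 1" "cmod z * norm (op_inv A0 o\<^sub>L A1) < 1"
  shows "(\<lambda>n. cscaleL (z ^ n) ((- 1::real) ^ n *\<^sub>R (opow (op_inv A0 o\<^sub>L A1) n o\<^sub>L op_inv A0))) sums R z"
proof -
  have "R 0 o\<^sub>L A0 = id_blinfun" "A0 o\<^sub>L R 0 = id_blinfun"
    using R_inv[rule_format, of 0] eps_pos by auto
  moreover from this have "op_inv A0 = R 0"
    by (rule op_inv_eqI)
  moreover have "R z o\<^sub>L (A0 + cscaleL z A1) = id_blinfun"
    using R_inv[rule_format, of z] assms(1) eps_pos by fastforce
  ultimately show ?thesis
    using perturbed_inverse_sums[OF A0_lin _ _ A1_lin, of "R 0" "R z" z] assms(2) by simp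
qed

lemma op_inv_id_minus_N: "op_inv (id_blinfun - N) = - N_shift_inv (- 1)"
proof (rule op_inv_eqI)
  have eq: "id_blinfun - N = - N_shift (- 1)"
    by (simp add: N_shift_def cscaleL_minus_one)
  show "- N_shift_inv (- 1) o\<^sub>L (id_blinfun - N) = id_blinfun"
    and "(id_blinfun - N) o\<^sub>L - N_shift_inv (- 1) = id_blinfun"
    unfolding eq using N_shift_inverse[of "- 1"]
    by (simp_all add: blinfun_compose.minus_left blinfun_compose.minus_right)
qed

lemma R_sin_taylor_at_0:
  assumes "cmod z < 1" "cmod z * norm (N_shift_inv (- 1)) < 1"
  shows "(\<lambda>n. cscaleL (z ^ n) (- (opow (op_inv (id_blinfun - N)) (n + 1) o\<^sub>L T (- 1)))) sums R_sin z"
proof -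
  have "z - 1 \<noteq> 0" using assms(1) by auto
  from bounded_linear.sums[OF blinfun_compose.bounded_linear_left
      N_shift_inv_sums[of "- 1" "z - 1", OF _ this], of "T (- 1)"] assms(2)
  have "(\<lambda>n. cscaleL (z ^ n) (((- 1::real) ^ n *\<^sub>R (opow (N_shift_inv (- 1)) n o\<^sub>L N_shift_inv (- 1)))
      o\<^sub>L T (- 1))) sums R_sin z"
    by (simp add: R_sin_def cscaleL_compose_left)
  moreover have "((- 1::real) ^ n *\<^sub>R (opow (N_shift_inv (- 1)) n o\<^sub>L N_shift_inv (- 1))) o\<^sub>L T (- 1)
      = - (opow (op_inv (id_blinfun - N)) (n + 1) o\<^sub>L T (- 1))" for n
    unfolding op_inv_id_minus_N opow_uminus
    by (simp add: opow_Suc' blinfun_compose.scaleR_left blinfun_compose.minus_left)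
  ultimately show ?thesis by simp
qed

lemma R_minus_R_sin_taylor_at_0:
  obtains r where "r > 0" "\<And>z. cmod z < r \<Longrightarrow> (\<lambda>n. cscaleL (z ^ n) (Q n)) sums (R z - R_sin z)"
proof
  define r where "r = min 1 (1 / (norm (op_inv A0 o\<^sub>L A1) + norm (N_shift_inv (- 1)) + 1))"
  show "r > 0" by (simp add: r_def add_nonneg_pos)
  fix z assume z: "cmod z < r"
  have small: "cmod z * norm X < 1" if "norm X \<le> norm (op_inv A0 o\<^sub>L A1) + norm (N_shift_inv (- 1))"
    for X :: "'a::real_normed_vector"
  proof -
    have "cmod z * (norm (op_inv A0 o\<^sub>L A1) + norm (N_shift_inv (- 1))) < 1"
      using z by (intro mult_less_1_if_less_inverse) (simp_all add: r_def)
    then show ?thesis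
      using mult_left_mono[OF that norm_ge_zero[of z]] by linarith
  qed
  have "cmod z < 1" using z by (simp add: r_def)
  from sums_diff[OF R_taylor_at_0[OF this small] R_sin_taylor_at_0[OF this small]]
  show "(\<lambda>n. cscaleL (z ^ n) (Q n)) sums (R z - R_sin z)"
    by (simp add: Q_def cscaleL_add_right cscaleL_minus_right)
qed

lemma Q_bound: "norm (Q s) \<le> c / (1 + \<epsilon>) ^ s"
  using Q_bound_unfolded by (simp add: Q_def)

lemma summable_norm_Q:
  assumes "0 \<le> t" "t < 1 + \<epsilon>"
  shows "summable (\<lambda>s. norm (Q s) * t ^ s)"
proof (rule summable_norm_mult_power_less[of Q "1 + \<epsilon>" c])
  show "norm (Q n) * (1 + \<epsilon>) ^ n \<le> c" for n
    using Q_bound[of n] eps_pos by (simp add: field_simps)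
qed (use assms in auto)

text \<open>The analytic continuation of \<open>R - R\<^sub>s\<^sub>i\<^sub>n\<close> from a neighbourhood of 0.\<close>

definition R_reg :: "complex \<Rightarrow> ('y \<Rightarrow>\<^sub>L 'x)" where
  "R_reg z = (\<Sum>s. cscaleL (z ^ s) (Q s))"

lemma R_reg_sums:
  assumes "cmod z < 1 + \<epsilon>"
  shows "(\<lambda>s. cscaleL (z ^ s) (Q s)) sums R_reg z"
proof -
  have "summable (\<lambda>s. norm (cscaleL (z ^ s) (Q s)))"
    using summable_norm_Q[of "cmod z"] assms by (simp add: norm_cscaleL norm_power mult.commute)
  then show ?thesis
    unfolding R_reg_def by (rule summable_sums[OF summable_norm_cancel])
qed

lemma R_reg_reexpand:
  assumes "cmod z0 + cmod w < 1 + \<epsilon>"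
  shows "(\<lambda>l. cscaleL (w ^ l) (\<Sum>r. cscaleL (of_nat ((l + r) choose l) * z0 ^ r) (Q (l + r))))
      sums R_reg (z0 + w)"
proof -
  define t where "t = (cmod z0 + cmod w + 1 + \<epsilon>) / 2"
  have t: "cmod z0 + cmod w < t" "t < 1 + \<epsilon>" "0 \<le> t"
    using assms eps_pos norm_ge_zero[of z0] norm_ge_zero[of w] by (auto simp: t_def)
  show ?thesis
    using power_series_reexpand[OF summable_norm_Q[OF t(3,2)] t(1)] by (simp add: R_reg_def)
qed

lemma R_reg_analytic: "op_analytic_on punctured_disc R_reg"
  unfolding op_analytic_on_def
proof
  fix z0 assume "z0 \<in> punctured_disc"
  define a where "a l = (\<Sum>r. cscaleL (of_nat ((l + r) choose l) * z0 ^ r) (Q (l + r)))" for l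
  have "(\<lambda>n. cscaleL ((z - z0) ^ n) (a n)) sums R_reg z" if "z \<in> ball z0 (1 + \<epsilon> - cmod z0)" for z
    using R_reg_reexpand[of z0 "z - z0"] that by (simp add: a_def dist_norm norm_minus_commute)
  moreover have "1 + \<epsilon> - cmod z0 > 0"
    using \<open>z0 \<in> punctured_disc\<close> by (simp add: punctured_disc_def)
  ultimately show "\<exists>r>0. \<exists>a. \<forall>z\<in>ball z0 r. (\<lambda>n. cscaleL ((z - z0) ^ n) (a n)) sums R_reg z"
    by blast
qed

lemma R_decomposition:
  assumes "z \<in> punctured_disc"
  shows "R z = R_sin z + R_reg z"
proof -
  obtain r where r: "r > 0" "\<And>z. cmod z < r \<Longrightarrow> (\<lambda>n. cscaleL (z ^ n) (Q n)) sums (R z - R_sin z)"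
    using R_minus_R_sin_taylor_at_0 by blast
  have "R w - R_sin w - R_reg w = 0" if "w \<in> ball 0 (min r (1 + \<epsilon>))" for w
    using sums_unique2[OF r(2) R_reg_sums, of w] that by simp
  moreover have "0 \<in> punctured_disc" "min r (1 + \<epsilon>) > 0"
    using r eps_pos by (auto simp: punctured_disc_def)
  moreover have "op_analytic_on punctured_disc (\<lambda>z. R z - R_sin z - R_reg z)"
    using R_analytic by (intro op_analytic_on_diff R_sin_analytic R_reg_analytic) (simp add: punctured_disc_def)
  ultimately have "R z - R_sin z - R_reg z = 0"
    by (intro op_analytic_on_eq_0[OF open_punctured_disc connected_punctured_disc, of _ 0 "min r (1 + \<epsilon>)"])
       (use assms in auto)
  then show ?thesis by (simp add: algebra_simps)
qed

text \<open>On \<open>0 < |z - 1| < \<epsilon>\<close> the non-negative part of the Laurent series is \<open>R - R\<^sub>s\<^sub>i\<^sub>n = R\<^sub>r\<^sub>e\<^sub>g\<close>,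
  whose Taylor coefficients at 1 are obtained by re-expanding the series of \<open>R\<^sub>r\<^sub>e\<^sub>g\<close> at 0.\<close>

lemma T_nonneg_eq: "T (int l) = (\<Sum>r. real ((l + r) choose l) *\<^sub>R Q (l + r))"
proof -
  define b where "b l = (\<Sum>r. cscaleL (of_nat ((l + r) choose l) * 1 ^ r) (Q (l + r)))" for l
  have "(\<lambda>n. cscaleL ((w - 0) ^ n) (T (int n) - b n)) sums 0"
    if w: "0 < cmod (w - 0)" "cmod (w - 0) < \<epsilon>" for w
  proof -
    obtain P M where PM: "(\<lambda>n. cscaleL (w powi int n) (T (int n))) sums P"
      "(\<lambda>n. cscaleL (w powi (- int (Suc n))) (T (- int (Suc n)))) sums M" "R (1 + w) = P + M"
      using has_sum_int_imp_sums[OF R_near_1(1)] w by auto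
    have "M = R_sin (1 + w)"
      using sums_unique2[OF PM(2) singular_part_sums] w by (simp add: R_sin_def)
    moreover have "1 + w \<in> punctured_disc"
      using w norm_triangle_ineq[of 1 w] by (auto simp: punctured_disc_def)
    ultimately have P: "P = R_reg (1 + w)"
      using PM(3) R_decomposition by simp
    have "(\<lambda>l. cscaleL (w ^ l) (b l)) sums R_reg (1 + w)"
      using R_reg_reexpand[of 1 w] w unfolding b_def by simp
    from sums_diff[OF PM(1) this] show ?thesis
      by (simp add: P cscaleL_diff_right)
  qed
  then have "T (int l) - b l = 0"
    by (intro power_series_coeffs_eq_0[of \<epsilon> 0 "\<lambda>n. T (int n) - b n" "\<lambda>_. 0"]) (use eps_pos in auto)
  then show ?thesis
    by (simp add: b_def cscaleL_of_real[symmetric])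
qed

lemma norm_binomial_Q_le: "norm (real ((l + r) choose l) *\<^sub>R Q (l + r))
    \<le> c / (1 + \<epsilon>) ^ l * (real ((l + r) choose l) * (1 / (1 + \<epsilon>)) ^ r)"
proof -
  have "norm (real ((l + r) choose l) *\<^sub>R Q (l + r)) \<le> real ((l + r) choose l) * (c / (1 + \<epsilon>) ^ (l + r))"
    using mult_left_mono[OF Q_bound[of "l + r"], of "real ((l + r) choose l)"] by simp
  then show ?thesis
    by (simp add: power_add power_divide mult.commute)
qed

lemma binomial_Q_summable_and_bound:
  shows "summable (\<lambda>r. norm (real ((l + r) choose l) *\<^sub>R Q (l + r)))"
    and "norm (T (int l)) \<le> c * (1 + \<epsilon>) / \<epsilon> ^ (l + 1)"
proof -
  have q: "0 \<le> 1 / (1 + \<epsilon>)" "1 / (1 + \<epsilon>) < 1" using eps_pos by auto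
  have bound: "(\<lambda>r. c / (1 + \<epsilon>) ^ l * (real ((l + r) choose l) * (1 / (1 + \<epsilon>)) ^ r))
      sums (c / (1 + \<epsilon>) ^ l * (1 / (1 - 1 / (1 + \<epsilon>)) ^ (l + 1)))"
    by (rule sums_mult[OF negative_binomial_sums[OF q]])
  show summable: "summable (\<lambda>r. norm (real ((l + r) choose l) *\<^sub>R Q (l + r)))"
    by (rule summable_comparison_test'[OF sums_summable[OF bound], of 0])
       (use norm_binomial_Q_le[of l] in \<open>simp only: real_norm_def abs_norm_cancel\<close>)
  have "norm (T (int l)) \<le> (\<Sum>r. norm (real ((l + r) choose l) *\<^sub>R Q (l + r)))"
    unfolding T_nonneg_eq by (rule summable_norm[OF summable])
  also have "\<dots> \<le> c / (1 + \<epsilon>) ^ l * (1 / (1 - 1 / (1 + \<epsilon>)) ^ (l + 1))"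
    using suminf_le[OF norm_binomial_Q_le summable sums_summable[OF bound]] bound by (simp add: sums_iff)
  also have "\<dots> = c * (1 + \<epsilon>) / \<epsilon> ^ (l + 1)"
    using eps_pos by (simp add: power_divide field_simps)
  finally show "norm (T (int l)) \<le> c * (1 + \<epsilon>) / \<epsilon> ^ (l + 1)" .
qed

end

theorem mainTheorem10:
  fixes A0 A1 :: "'x::complex_banach \<Rightarrow>\<^sub>L 'y::complex_banach"
    and R :: "complex \<Rightarrow> ('y \<Rightarrow>\<^sub>L 'x)"
    and T :: "int \<Rightarrow> ('y \<Rightarrow>\<^sub>L 'x)"
    and \<epsilon> c :: real
  assumes A0_lin: "clinear_op A0" and A1_lin: "clinear_op A1"
    and eps_pos: "\<epsilon> > 0"
    and R_inv: "\<forall>z. cmod z < 1 + \<epsilon> \<and> z \<noteq> 1 \<longrightarrow>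
                  R z o\<^sub>L (A0 + cscaleL z A1) = id_blinfun \<and> (A0 + cscaleL z A1) o\<^sub>L R z = id_blinfun"
    and R_analytic: "op_analytic_on {z. cmod z < 1 + \<epsilon> \<and> z \<noteq> 1} R"
    and T_lin: "\<forall>j. clinear_op (T j)"
    and Laurent: "\<forall>z. 0 < cmod (z - 1) \<and> cmod (z - 1) < \<epsilon> \<longrightarrow>
                  ((\<lambda>j. cscaleL ((z - 1) powi j) (T j)) has_sum R z) UNIV"
    and c_pos: "c > 0"
    and Q_bound: "\<forall>s. norm ((-1::real) ^ s *\<^sub>R (opow (op_inv A0 o\<^sub>L A1) s o\<^sub>L op_inv A0)
                     + (opow (op_inv (id_blinfun - (T (-1) o\<^sub>L (A0 + A1)))) (s + 1) o\<^sub>L T (-1)))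
                   \<le> c / (1 + \<epsilon>) ^ s"
  shows "\<forall>l::nat.
     (let Q = (\<lambda>s. (-1::real) ^ s *\<^sub>R (opow (op_inv A0 o\<^sub>L A1) s o\<^sub>L op_inv A0)
                   + (opow (op_inv (id_blinfun - (T (-1) o\<^sub>L (A0 + A1)))) (s + 1) o\<^sub>L T (-1)))
      in summable (\<lambda>r. norm (real ((l + r) choose l) *\<^sub>R Q (l + r)))
         \<and> T (int l) = (\<Sum>r. real ((l + r) choose l) *\<^sub>R Q (l + r))
         \<and> norm (T (int l)) \<le> c * (1 + \<epsilon>) / \<epsilon> ^ (l + 1))"
proof -
  interpret pencil_resolvent A0 A1 R T \<epsilon> c
    using A0_lin A1_lin eps_pos R_inv R_analytic T_lin Laurent Q_bound by unfold_locales
  have "(\<lambda>s. (-1::real) ^ s *\<^sub>R (opow (op_inv A0 o\<^sub>L A1) s o\<^sub>L op_inv A0)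
      + (opow (op_inv (id_blinfun - (T (-1) o\<^sub>L (A0 + A1)))) (s + 1) o\<^sub>L T (-1))) = Q"
    by (rule ext) (simp add: Q_def)
  then show ?thesis
    using binomial_Q_summable_and_bound T_nonneg_eq by (simp add: Let_def)
qed

end
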